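(* Let $k\geqslant 1$ be an integer. The following $\mathbb{Z}_p$-Lie lattices (each on a basis $x_0,x_1,x_2$ with $[x_1,x_2]=0$) are self-similar of index $p^k$: (1) $L_6(a)$ for any $a\in\mathbb{Z}_p$, where $[x_0,x_1]=ax_1$, $[x_0,x_2]=ax_2$; (2) $L_2(s,r,c)$ with $s,r\in\mathbb{N}$, $c\in\mathbb{Z}_p$, $v_p(c)=1$, where $[x_0,x_1]=p^sx_1+p^{s+r}cx_2$, $[x_0,x_2]=p^{s+r}x_1+p^sx_2$; (3) $L_7(s,a,c)$ with $s\in\mathbb{N}$, $a,c\in\mathbb{Z}_p$, where $[x_0,x_1]=p^sax_1+p^scx_2$, $[x_0,x_2]=p^sx_1$, provided either $v_p(c)=1$ and $v_p(a)\geqslant 1$, or $v_p(4c+a^2)=1$, $v_p(a)=0$ and $v_p(c)=0$; (4) for $p\geqslant 3$, $L_7(s,0,1)$ with $s\in\mathbb{N}$.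
   Context: $p$ is a prime (arbitrary unless stated), $\mathbb{N}=\{0,1,2,\dots\}$, $v_p$ is the $p$-adic valuation. A $\mathbb{Z}_p$-Lie lattice is a $\mathbb{Z}_p$-Lie algebra whose underlying module is finitely generated and free. A virtual endomorphism of $L$ is a homomorphism of algebras $\varphi:M\to L$ with $M\subseteq L$ a finite-index subalgebra, of index $[L:M]$. An ideal $I$ of $L$ is $\varphi$-invariant if it lies in the domain of every power of $\varphi$ and $\varphi(I)\subseteq I$; $\varphi$ is simple if no non-zero ideal is $\varphi$-invariant. $L$ is self-similar of index $p^k$ if it has a simple virtual endomorphism of index $p^k$. *)

theory Defs
  imports Main "HOL-Library.Extended_Nat" "HOL-Computational_Algebra.Primes"
begin

text \<open>An element of Z_p is represented by its compatible sequence of residues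
  x m in {0..<p^m}, with x (Suc m) mod p^m = x m.\<close>

type_synonym zp = "nat \<Rightarrow> int"

definition Zp :: "nat \<Rightarrow> zp set" where
  "Zp p = {x. \<forall>m. 0 \<le> x m \<and> x m < int p ^ m \<and> x (Suc m) mod int p ^ m = x m}"

definition zzero :: zp where "zzero = (\<lambda>m. 0)"

definition zadd :: "nat \<Rightarrow> zp \<Rightarrow> zp \<Rightarrow> zp" where
  "zadd p x y = (\<lambda>m. (x m + y m) mod int p ^ m)"

definition zmul :: "nat \<Rightarrow> zp \<Rightarrow> zp \<Rightarrow> zp" where
  "zmul p x y = (\<lambda>m. (x m * y m) mod int p ^ m)"

definition zneg :: "nat \<Rightarrow> zp \<Rightarrow> zp" where
  "zneg p x = (\<lambda>m. (- x m) mod int p ^ m)"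

definition zof_int :: "nat \<Rightarrow> int \<Rightarrow> zp" where
  "zof_int p z = (\<lambda>m. z mod int p ^ m)"

definition zval :: "nat \<Rightarrow> zp \<Rightarrow> enat" where
  "zval p x = (if x = zzero then \<infinity> else enat (LEAST n. x (Suc n) \<noteq> 0))"

type_synonym zvec = "nat \<Rightarrow> zp"

definition lat :: "nat \<Rightarrow> nat \<Rightarrow> zvec set" where
  "lat p n = {v. (\<forall>i<n. v i \<in> Zp p) \<and> (\<forall>i. n \<le> i \<longrightarrow> v i = zzero)}"

definition vzero :: zvec where "vzero = (\<lambda>i. zzero)"

definition vadd :: "nat \<Rightarrow> zvec \<Rightarrow> zvec \<Rightarrow> zvec" where
  "vadd p u v = (\<lambda>i. zadd p (u i) (v i))"

definition vneg :: "nat \<Rightarrow> zvec \<Rightarrow> zvec" where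
  "vneg p v = (\<lambda>i. zneg p (v i))"

definition vsmul :: "nat \<Rightarrow> zp \<Rightarrow> zvec \<Rightarrow> zvec" where
  "vsmul p a v = (\<lambda>i. zmul p a (v i))"

text \<open>Structure constants: C i j is the vector [x_i, x_j] (coordinates w.r.t. x_0..x_{n-1}).
  The bracket is the bilinear extension, computed level-wise modulo p^m.\<close>

definition br :: "nat \<Rightarrow> nat \<Rightarrow> (nat \<Rightarrow> nat \<Rightarrow> zvec) \<Rightarrow> zvec \<Rightarrow> zvec \<Rightarrow> zvec" where
  "br p n C u v = (\<lambda>k. if k < n then
      (\<lambda>m. (\<Sum>i<n. \<Sum>j<n. u i m * v j m * C i j k m) mod int p ^ m) else zzero)"

definition submod :: "nat \<Rightarrow> nat \<Rightarrow> zvec set \<Rightarrow> bool" where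
  "submod p n M \<longleftrightarrow> M \<subseteq> lat p n \<and> vzero \<in> M \<and>
     (\<forall>u\<in>M. \<forall>v\<in>M. vadd p u v \<in> M) \<and> (\<forall>a\<in>Zp p. \<forall>u\<in>M. vsmul p a u \<in> M)"

definition subalg :: "nat \<Rightarrow> nat \<Rightarrow> (nat \<Rightarrow> nat \<Rightarrow> zvec) \<Rightarrow> zvec set \<Rightarrow> bool" where
  "subalg p n C M \<longleftrightarrow> submod p n M \<and> (\<forall>u\<in>M. \<forall>v\<in>M. br p n C u v \<in> M)"

definition lie_ideal :: "nat \<Rightarrow> nat \<Rightarrow> (nat \<Rightarrow> nat \<Rightarrow> zvec) \<Rightarrow> zvec set \<Rightarrow> bool" where
  "lie_ideal p n C I \<longleftrightarrow> submod p n I \<and> (\<forall>x\<in>lat p n. \<forall>y\<in>I. br p n C x y \<in> I)"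

text \<open>Index [L:M] = number of cosets x + M of M in L (0 if infinite).\<close>
definition lat_index :: "nat \<Rightarrow> nat \<Rightarrow> zvec set \<Rightarrow> nat" where
  "lat_index p n M = card ((\<lambda>x. {y \<in> lat p n. vadd p y (vneg p x) \<in> M}) ` lat p n)"

definition alg_hom_on :: "nat \<Rightarrow> nat \<Rightarrow> (nat \<Rightarrow> nat \<Rightarrow> zvec) \<Rightarrow> zvec set \<Rightarrow> (zvec \<Rightarrow> zvec) \<Rightarrow> bool" where
  "alg_hom_on p n C M \<phi> \<longleftrightarrow> (\<forall>u\<in>M. \<phi> u \<in> lat p n) \<and>
     (\<forall>u\<in>M. \<forall>v\<in>M. \<phi> (vadd p u v) = vadd p (\<phi> u) (\<phi> v)) \<and>
     (\<forall>a\<in>Zp p. \<forall>u\<in>M. \<phi> (vsmul p a u) = vsmul p a (\<phi> u)) \<and>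
     (\<forall>u\<in>M. \<forall>v\<in>M. \<phi> (br p n C u v) = br p n C (\<phi> u) (\<phi> v))"

fun vdom :: "nat \<Rightarrow> nat \<Rightarrow> zvec set \<Rightarrow> (zvec \<Rightarrow> zvec) \<Rightarrow> nat \<Rightarrow> zvec set" where
  "vdom p n M \<phi> 0 = lat p n"
| "vdom p n M \<phi> (Suc j) = {x \<in> M. \<phi> x \<in> vdom p n M \<phi> j}"

definition invariant :: "nat \<Rightarrow> nat \<Rightarrow> zvec set \<Rightarrow> (zvec \<Rightarrow> zvec) \<Rightarrow> zvec set \<Rightarrow> bool" where
  "invariant p n M \<phi> I \<longleftrightarrow> (\<forall>j. I \<subseteq> vdom p n M \<phi> j) \<and> \<phi> ` I \<subseteq> I"

definition simple_ve :: "nat \<Rightarrow> nat \<Rightarrow> (nat \<Rightarrow> nat \<Rightarrow> zvec) \<Rightarrow> zvec set \<Rightarrow> (zvec \<Rightarrow> zvec) \<Rightarrow> bool" where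
  "simple_ve p n C M \<phi> \<longleftrightarrow>
     (\<forall>I. lie_ideal p n C I \<and> invariant p n M \<phi> I \<longrightarrow> I = {vzero})"

definition self_similar_index :: "nat \<Rightarrow> nat \<Rightarrow> (nat \<Rightarrow> nat \<Rightarrow> zvec) \<Rightarrow> nat \<Rightarrow> bool" where
  "self_similar_index p n C N \<longleftrightarrow>
     (\<exists>M \<phi>. subalg p n C M \<and> lat_index p n M = N \<and> alg_hom_on p n C M \<phi> \<and> simple_ve p n C M \<phi>)"

definition mkv3 :: "zp \<Rightarrow> zp \<Rightarrow> zp \<Rightarrow> zvec" where
  "mkv3 a b c = (\<lambda>i. if i = 0 then a else if i = 1 then b else if i = 2 then c else zzero)"

definition str3 :: "nat \<Rightarrow> zvec \<Rightarrow> zvec \<Rightarrow> nat \<Rightarrow> nat \<Rightarrow> zvec" where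
  "str3 p w1 w2 = (\<lambda>i j. if i = 0 \<and> j = 1 then w1 else if i = 1 \<and> j = 0 then vneg p w1
     else if i = 0 \<and> j = 2 then w2 else if i = 2 \<and> j = 0 then vneg p w2 else vzero)"

definition zpow :: "nat \<Rightarrow> nat \<Rightarrow> zp" where
  "zpow p s = zof_int p (int p ^ s)"

definition L6 :: "nat \<Rightarrow> zp \<Rightarrow> nat \<Rightarrow> nat \<Rightarrow> zvec" where
  "L6 p a = str3 p (mkv3 zzero a zzero) (mkv3 zzero zzero a)"

definition L2 :: "nat \<Rightarrow> nat \<Rightarrow> nat \<Rightarrow> zp \<Rightarrow> nat \<Rightarrow> nat \<Rightarrow> zvec" where
  "L2 p s r c = str3 p (mkv3 zzero (zpow p s) (zmul p (zpow p (s + r)) c))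
                       (mkv3 zzero (zpow p (s + r)) (zpow p s))"

definition L7 :: "nat \<Rightarrow> nat \<Rightarrow> zp \<Rightarrow> zp \<Rightarrow> nat \<Rightarrow> nat \<Rightarrow> zvec" where
  "L7 p s a c = str3 p (mkv3 zzero (zmul p (zpow p s) a) (zmul p (zpow p s) c))
                       (mkv3 zzero (zpow p s) zzero)"

end

theory Submission
  imports Defs
begin

text \<open>Each lattice is \<open>L = \<int>\<^sub>p x\<^sub>0 \<oplus> A\<close> with \<open>A = \<langle>x\<^sub>1, x\<^sub>2\<rangle>\<close> an abelian ideal on which
  \<open>ad x\<^sub>0\<close> acts by a matrix \<open>W\<close>. If \<open>B = T(\<int>\<^sub>p\<^sup>2)\<close> is a \<open>W\<close>-stable sublattice of \<open>A\<close> of index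
  \<open>p^(E1+E2)\<close>, then \<open>M = \<int>\<^sub>p x\<^sub>0 \<oplus> B\<close> is a subalgebra, and \<open>x\<^sub>0 \<mapsto> \<sigma> x\<^sub>0\<close>, \<open>T d \<mapsto> N d\<close> is a
  homomorphism \<open>M \<rightarrow> L\<close> as soon as \<open>N T^-1 W T = \<sigma> W N\<close>. If in addition every two steps of
  this map gain a factor \<open>p\<close>, the only element of \<open>A\<close> in the domains of all its powers is \<open>0\<close>.
  An invariant ideal \<open>I\<close> is then centralised by \<open>A\<close>, because \<open>[A, I] \<subseteq> I \<inter> A\<close>, so the
  \<open>x\<^sub>0\<close>-coordinates of \<open>I\<close> are annihilated by \<open>W \<noteq> 0\<close> and \<open>I = 0\<close>. For the index \<open>p^(2j)\<close>
  one takes \<open>B = p^j A\<close> and \<open>N = 1\<close>; for odd exponents the valuation hypotheses are what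
  allows choosing \<open>B\<close> and \<open>N\<close>. The abelian lattice \<open>L\<^sub>6(0)\<close> is handled by the shift
  \<open>(v\<^sub>0, v\<^sub>1, v\<^sub>2) \<mapsto> (v\<^sub>2 / p^k, v\<^sub>0, v\<^sub>1)\<close> on \<open>{v. p^k | v\<^sub>2}\<close>.\<close>

section \<open>The ring of p-adic integers\<close>

definition zsub :: "nat \<Rightarrow> zp \<Rightarrow> zp \<Rightarrow> zp" where
  "zsub p x y = zadd p x (zneg p y)"

abbreviation zone :: "nat \<Rightarrow> zp" where
  "zone p \<equiv> zof_int p 1"

definition zp_dvd :: "nat \<Rightarrow> nat \<Rightarrow> zp \<Rightarrow> bool" where
  "zp_dvd p e x \<longleftrightarrow> x e = 0"

definition zp_div_pow :: "nat \<Rightarrow> nat \<Rightarrow> zp \<Rightarrow> zp" where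
  "zp_div_pow p e x = (\<lambda>m. x (m + e) div int p ^ e)"

definition zp_unit :: "nat \<Rightarrow> zp \<Rightarrow> bool" where
  "zp_unit p u \<longleftrightarrow> u \<in> Zp p \<and> u 1 \<noteq> 0"

text \<open>\<open>zhalf p\<close> is the inverse of 2 in \<open>\<int>\<^sub>p\<close> for odd \<open>p\<close>; at level \<open>m\<close> it is \<open>(p^m + 1) / 2\<close>.\<close>

definition zhalf :: "nat \<Rightarrow> zp" where
  "zhalf p = (\<lambda>m. ((int p ^ m + 1) div 2) mod int p ^ m)"

locale padic =
  fixes p :: nat
  assumes prime_p: "prime p"
begin

lemma p_gt_1: "1 < p"
  using prime_p prime_gt_1_nat by blast

lemma p_neq_0 [simp]: "p \<noteq> 0"
  using p_gt_1 by simp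

lemma p_power_pos [simp]: "0 < int p ^ m"
  using p_gt_1 by simp

lemma ZpD: "x \<in> Zp p \<Longrightarrow> 0 \<le> x m \<and> x m < int p ^ m \<and> x (Suc m) mod int p ^ m = x m"
  by (simp add: Zp_def)

lemma Zp_mod [simp]: "x \<in> Zp p \<Longrightarrow> x m mod int p ^ m = x m"
  using ZpD[of x m] by simp

lemma Zp_0 [simp]: "x \<in> Zp p \<Longrightarrow> x 0 = 0"
  using ZpD[of x 0] by simp

lemma Zp_mod_Suc [simp]: "x \<in> Zp p \<Longrightarrow> x (Suc m) mod int p ^ m = x m"
  using ZpD[of x m] by simp

lemma Zp_mod_le:
  assumes "x \<in> Zp p" "m \<le> n"
  shows "x n mod int p ^ m = x m"
  using assms(2)
proof (induction n)
  case 0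
  then show ?case using assms(1) by simp
next
  case (Suc n)
  show ?case
  proof (cases "m = Suc n")
    case True
    then show ?thesis by (simp only: Zp_mod[OF assms(1)])
  next
    case False
    then have "m \<le> n" using Suc by simp
    then have "x (Suc n) mod int p ^ m = x (Suc n) mod int p ^ n mod int p ^ m"
      by (simp add: mod_mod_cancel le_imp_power_dvd)
    then show ?thesis using Suc.IH \<open>m \<le> n\<close> assms(1) by simp
  qed
qed

lemma ZpI:
  assumes "\<And>m. x m = X m mod int p ^ m"
    and "\<And>m. X (Suc m) mod int p ^ m = X m mod int p ^ m"
  shows "x \<in> Zp p"
  unfolding Zp_def
proof (intro CollectI allI conjI)
  fix m
  show "0 \<le> x m" unfolding assms(1) by (rule pos_mod_sign[OF p_power_pos])
  show "x m < int p ^ m" unfolding assms(1) by (rule pos_mod_bound[OF p_power_pos])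
  have "int p ^ m dvd int p ^ Suc m"
    by (simp add: le_imp_power_dvd)
  then show "x (Suc m) mod int p ^ m = x m"
    unfolding assms(1) by (simp add: mod_mod_cancel assms(2))
qed

lemma zzero_Zp [simp]: "zzero \<in> Zp p"
  unfolding zzero_def by (rule ZpI[where X = "\<lambda>m. 0"]) simp_all

lemma zof_int_Zp [simp]: "zof_int p z \<in> Zp p"
  unfolding zof_int_def by (rule ZpI[where X = "\<lambda>m. z"]) simp_all

lemma zpow_Zp [simp]: "zpow p s \<in> Zp p"
  by (simp add: zpow_def)

lemma zadd_Zp [simp]:
  assumes "x \<in> Zp p" "y \<in> Zp p"
  shows "zadd p x y \<in> Zp p"
  unfolding zadd_def
proof (rule ZpI[where X = "\<lambda>m. x m + y m"])
  fix m
  have "(x (Suc m) + y (Suc m)) mod int p ^ m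
      = (x (Suc m) mod int p ^ m + y (Suc m) mod int p ^ m) mod int p ^ m"
    by (simp add: mod_simps)
  then show "(x (Suc m) + y (Suc m)) mod int p ^ m = (x m + y m) mod int p ^ m"
    using assms by simp
qed simp

lemma zmul_Zp [simp]:
  assumes "x \<in> Zp p" "y \<in> Zp p"
  shows "zmul p x y \<in> Zp p"
  unfolding zmul_def
proof (rule ZpI[where X = "\<lambda>m. x m * y m"])
  fix m
  have "(x (Suc m) * y (Suc m)) mod int p ^ m
      = (x (Suc m) mod int p ^ m * (y (Suc m) mod int p ^ m)) mod int p ^ m"
    by (simp add: mod_simps)
  then show "(x (Suc m) * y (Suc m)) mod int p ^ m = (x m * y m) mod int p ^ m"
    using assms by simp
qed simp

lemma zneg_Zp [simp]:
  assumes "x \<in> Zp p"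
  shows "zneg p x \<in> Zp p"
  unfolding zneg_def
proof (rule ZpI[where X = "\<lambda>m. - x m"])
  fix m
  have "(- x (Suc m)) mod int p ^ m = (- (x (Suc m) mod int p ^ m)) mod int p ^ m"
    by (simp add: mod_simps)
  then show "(- x (Suc m)) mod int p ^ m = (- x m) mod int p ^ m"
    using assms by simp
qed simp

lemma Zp_eqI:
  "x \<in> Zp p \<Longrightarrow> y \<in> Zp p \<Longrightarrow> (\<And>m. x m mod int p ^ m = y m mod int p ^ m) \<Longrightarrow> x = y"
  by (rule ext) simp

lemma zp_levels:
  "zadd p x y m = (x m + y m) mod int p ^ m"
  "zmul p x y m = (x m * y m) mod int p ^ m"
  "zneg p x m = (- x m) mod int p ^ m"
  "zof_int p z m = z mod int p ^ m"
  "zpow p s m = int p ^ s mod int p ^ m"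
  "zzero m = 0"
  by (simp_all add: zadd_def zmul_def zneg_def zof_int_def zpow_def zzero_def)

lemma zsub_Zp [simp]: "x \<in> Zp p \<Longrightarrow> y \<in> Zp p \<Longrightarrow> zsub p x y \<in> Zp p"
  by (simp add: zsub_def)

lemma zp_dvd_level:
  assumes "x \<in> Zp p" "zp_dvd p e x" "e \<le> m"
  shows "int p ^ e dvd x m"
  using Zp_mod_le[OF assms(1,3)] assms(2) by (simp add: zp_dvd_def dvd_eq_mod_eq_0)

lemma zp_dvdI:
  assumes "x \<in> Zp p" "e \<le> m" "int p ^ e dvd x m"
  shows "zp_dvd p e x"
  using Zp_mod_le[OF assms(1,2)] assms(3) by (simp add: zp_dvd_def dvd_eq_mod_eq_0)

lemma zp_dvd_0 [simp]: "x \<in> Zp p \<Longrightarrow> zp_dvd p 0 x"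
  by (simp add: zp_dvd_def)

lemma zp_dvd_zzero [simp]: "zp_dvd p e zzero"
  by (simp add: zp_dvd_def zzero_def)

lemma zp_dvd_mono:
  assumes "x \<in> Zp p" "zp_dvd p e x" "e' \<le> e"
  shows "zp_dvd p e' x"
proof -
  have "int p ^ e' dvd int p ^ e"
    using assms(3) by (rule le_imp_power_dvd)
  then have "int p ^ e' dvd x e"
    using zp_dvd_level[OF assms(1,2) order.refl] by (rule dvd_trans)
  then show ?thesis
    using zp_dvdI[OF assms(1,3)] by simp
qed

lemma zp_dvd_zadd: "zp_dvd p e x \<Longrightarrow> zp_dvd p e y \<Longrightarrow> zp_dvd p e (zadd p x y)"
  by (simp add: zp_dvd_def zadd_def)

lemma zp_dvd_zsub: "zp_dvd p e x \<Longrightarrow> zp_dvd p e y \<Longrightarrow> zp_dvd p e (zsub p x y)"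
  by (simp add: zp_dvd_def zsub_def zadd_def zneg_def)

lemma zp_dvd_zmul: "zp_dvd p e y \<Longrightarrow> zp_dvd p e (zmul p a y)"
  by (simp add: zp_dvd_def zmul_def)

lemma zp_dvd_zpow_mult:
  assumes "x \<in> Zp p" "zp_dvd p r x" "n \<le> r + e"
  shows "zp_dvd p n (zmul p (zpow p e) x)"
proof -
  obtain q where q: "x (r + e) = int p ^ r * q"
    using zp_dvd_level[OF assms(1,2)] by (meson dvdE le_add1)
  have "(int p ^ e mod int p ^ (r + e) * x (r + e)) mod int p ^ (r + e)
      = (int p ^ e * x (r + e)) mod int p ^ (r + e)"
    by (simp add: mod_simps)
  also have "\<dots> = 0"
    unfolding q by (simp add: power_add algebra_simps)
  finally have "zp_dvd p (r + e) (zmul p (zpow p e) x)"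
    by (simp add: zp_dvd_def zp_levels)
  then show ?thesis
    using zp_dvd_mono assms by simp
qed

lemma zp_div_pow_Zp [simp]:
  assumes "x \<in> Zp p" "zp_dvd p e x"
  shows "zp_div_pow p e x \<in> Zp p"
  unfolding Zp_def zp_div_pow_def
proof (intro CollectI allI conjI)
  fix m
  obtain a where a: "x (Suc m + e) = int p ^ e * a"
    using zp_dvd_level[OF assms] by (meson dvdE le_add2)
  obtain b where b: "x (m + e) = int p ^ e * b"
    using zp_dvd_level[OF assms] by (meson dvdE le_add2)
  have "0 \<le> int p ^ e * b" "int p ^ e * b < int p ^ e * int p ^ m"
    using ZpD[OF assms(1), of "m + e"] b by (simp_all add: power_add mult.commute)
  then show "0 \<le> x (m + e) div int p ^ e" "x (m + e) div int p ^ e < int p ^ m"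
    using b p_power_pos[of e] by (simp_all add: zero_le_mult_iff mult_less_cancel_left)
  have "x (Suc m + e) mod int p ^ (m + e) = x (m + e)"
    by (rule Zp_mod_le[OF assms(1)]) simp
  then have "a mod int p ^ m = b"
    unfolding a b by (simp add: power_add mult.commute mod_mult_mult1)
  then show "x (Suc m + e) div int p ^ e mod int p ^ m = x (m + e) div int p ^ e"
    using a b by simp
qed

lemma zpow_mult_div_pow:
  assumes "x \<in> Zp p" "zp_dvd p e x"
  shows "zmul p (zpow p e) (zp_div_pow p e x) = x"
proof
  fix m
  obtain a where a: "x (m + e) = int p ^ e * a"
    using zp_dvd_level[OF assms] by (meson dvdE le_add2)
  have "(int p ^ e mod int p ^ m * (x (m + e) div int p ^ e)) mod int p ^ m
      = x (m + e) mod int p ^ m"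
    unfolding a by (simp add: mod_simps)
  also have "\<dots> = x m"
    by (rule Zp_mod_le[OF assms(1)]) simp
  finally show "zmul p (zpow p e) (zp_div_pow p e x) m = x m"
    by (simp add: zp_levels zp_div_pow_def)
qed

lemma zpow_mult_cancel:
  assumes "x \<in> Zp p" "y \<in> Zp p" "zmul p (zpow p e) x = zmul p (zpow p e) y"
  shows "x = y"
proof
  fix m
  have shift: "zmul p (zpow p e) z (m + e) = int p ^ e * z m" if "z \<in> Zp p" for z
  proof -
    have "zmul p (zpow p e) z (m + e) = (int p ^ e * z (m + e)) mod (int p ^ e * int p ^ m)"
      by (simp add: zp_levels mod_simps power_add mult.commute)
    also have "\<dots> = int p ^ e * (z (m + e) mod int p ^ m)"
      by (rule mod_mult_mult1)
    also have "z (m + e) mod int p ^ m = z m"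
      by (rule Zp_mod_le[OF that]) simp
    finally show ?thesis .
  qed
  show "x m = y m"
    using shift[OF assms(1)] shift[OF assms(2)] assms(3) by simp
qed

lemma zp_div_pow_eqI:
  assumes "y \<in> Zp p" "x = zmul p (zpow p e) y"
  shows "zp_div_pow p e x = y"
proof -
  have x: "x \<in> Zp p" "zp_dvd p e x"
    using assms zp_dvd_zpow_mult[of y 0 e e] by simp_all
  show ?thesis
    by (rule zpow_mult_cancel[of _ _ e]) (use x assms zpow_mult_div_pow in simp_all)
qed

lemma zp_dvd_div_pow:
  assumes "x \<in> Zp p" "zp_dvd p e x" "zp_dvd p r (zp_div_pow p e x)"
  shows "zp_dvd p (r + e) x"
proof -
  obtain a where "x (r + e) = int p ^ e * a"
    using zp_dvd_level[OF assms(1,2)] by (meson dvdE le_add2)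
  then show ?thesis
    using assms(3) by (simp add: zp_dvd_def zp_div_pow_def)
qed

lemma zp_dvd_all_eq_zzero: "(\<And>r. zp_dvd p r x) \<Longrightarrow> x = zzero"
  by (rule ext) (simp add: zp_dvd_def zzero_def)

lemma zp_unit_Zp: "zp_unit p u \<Longrightarrow> u \<in> Zp p"
  by (simp add: zp_unit_def)

lemma zp_unit_not_dvd:
  assumes "zp_unit p u" "1 \<le> r"
  shows "\<not> int p dvd u r"
proof
  assume "int p dvd u r"
  then have "zp_dvd p 1 u"
    using zp_dvdI[OF zp_unit_Zp[OF assms(1)] assms(2)] by simp
  then show False
    using assms(1) by (simp add: zp_dvd_def zp_unit_def)
qed

lemma zp_dvd_unit_mult:
  assumes "zp_unit p u" "x \<in> Zp p" "zp_dvd p r (zmul p u x)"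
  shows "zp_dvd p r x"
proof (cases "r = 0")
  case True
  then show ?thesis using assms(2) by simp
next
  case False
  have "coprime (int p ^ r) (u r)"
    using zp_unit_not_dvd[OF assms(1)] False prime_p
    by (simp add: prime_imp_coprime)
  moreover have "int p ^ r dvd u r * x r"
    using assms(3) by (simp add: zp_dvd_def zp_levels dvd_eq_mod_eq_0)
  ultimately have "int p ^ r dvd x r"
    using coprime_dvd_mult_right_iff by blast
  then show ?thesis
    using assms(2) by (simp add: zp_dvd_def dvd_eq_mod_eq_0)
qed

lemma zp_unit_zmul:
  assumes "zp_unit p u" "zp_unit p v"
  shows "zp_unit p (zmul p u v)"
proof -
  have "\<not> int p dvd u 1 * v 1"
    using zp_unit_not_dvd assms prime_p by (simp add: prime_dvd_mult_iff)
  then show ?thesis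
    using assms by (simp add: zp_unit_def zp_levels zp_unit_Zp dvd_eq_mod_eq_0)
qed

lemma zp_unit_div_pow:
  assumes "c \<in> Zp p" "zp_dvd p e c" "\<not> zp_dvd p (Suc e) c"
  shows "zp_unit p (zp_div_pow p e c)"
proof -
  obtain a where a: "c (Suc e) = int p ^ e * a"
    using zp_dvd_level[OF assms(1,2)] by (meson dvdE le_SucI order.refl)
  then have "zp_div_pow p e c 1 \<noteq> 0"
    using assms(3) by (auto simp: zp_dvd_def zp_div_pow_def)
  then show ?thesis
    using zp_div_pow_Zp[OF assms(1,2)] by (simp add: zp_unit_def)
qed

lemma zp_unit_factor:
  assumes "c \<in> Zp p" "zp_dvd p 1 c" "\<not> zp_dvd p 2 c"
  obtains u where "zp_unit p u" "c = zmul p (zpow p 1) u"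
  using zp_unit_div_pow[of c 1] zpow_mult_div_pow[of c 1] assms
  by (simp add: numeral_2_eq_2)

lemma zp_exact_power:
  assumes "a \<in> Zp p" "a \<noteq> zzero"
  obtains e where "zp_dvd p e a" "\<not> zp_dvd p (Suc e) a"
proof -
  have "\<exists>r. \<not> zp_dvd p r a"
    using zp_dvd_all_eq_zzero assms(2) by blast
  then have ne: "\<not> zp_dvd p (LEAST r. \<not> zp_dvd p r a) a"
    by (rule LeastI_ex)
  then obtain e where e: "(LEAST r. \<not> zp_dvd p r a) = Suc e"
    using assms(1) by (cases "LEAST r. \<not> zp_dvd p r a") auto
  then have "zp_dvd p e a"
    using not_less_Least[of e "\<lambda>r. \<not> zp_dvd p r a"] by simp
  then show ?thesis
    using that ne e by simp
qed

lemma zmul_eq_zzeroD: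
  assumes "x \<in> Zp p" "a \<in> Zp p" "a \<noteq> zzero" "zmul p x a = zzero"
  shows "x = zzero"
proof -
  obtain e where e: "zp_dvd p e a" "\<not> zp_dvd p (Suc e) a"
    using zp_exact_power[OF assms(2,3)] by blast
  let ?u = "zp_div_pow p e a"
  have u: "zp_unit p ?u" "?u \<in> Zp p"
    using zp_unit_div_pow[OF assms(2) e] zp_unit_Zp by blast+
  have "zmul p (zpow p e) (zmul p ?u x) = zmul p x (zmul p (zpow p e) ?u)"
    by (rule Zp_eqI; simp add: assms u; simp only: zp_levels mod_simps; simp add: algebra_simps)
  also have "\<dots> = zmul p (zpow p e) zzero"
    using zpow_mult_div_pow[OF assms(2) e(1)] assms(4) by (simp add: zp_levels zmul_def zzero_def)
  finally have "zmul p ?u x = zzero"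
    by (rule zpow_mult_cancel[rotated 2]) (simp_all add: assms u)
  then have "zp_dvd p r x" for r
    using zp_dvd_unit_mult[OF u(1) assms(1), of r] by simp
  then show ?thesis
    by (rule zp_dvd_all_eq_zzero)
qed

lemma zp_div_pow_zadd:
  assumes "x \<in> Zp p" "y \<in> Zp p" "zp_dvd p e x" "zp_dvd p e y"
  shows "zp_div_pow p e (zadd p x y) = zadd p (zp_div_pow p e x) (zp_div_pow p e y)"
proof (rule zp_div_pow_eqI)
  have "zmul p (zpow p e) (zadd p (zp_div_pow p e x) (zp_div_pow p e y)) =
      zadd p (zmul p (zpow p e) (zp_div_pow p e x)) (zmul p (zpow p e) (zp_div_pow p e y))"
    by (rule ext) (simp only: zp_levels mod_simps; simp add: algebra_simps)
  then show "zadd p x y = zmul p (zpow p e) (zadd p (zp_div_pow p e x) (zp_div_pow p e y))"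
    using zpow_mult_div_pow assms by simp
qed (use assms in simp)

lemma zp_div_pow_zmul:
  assumes "a \<in> Zp p" "x \<in> Zp p" "zp_dvd p e x"
  shows "zp_div_pow p e (zmul p a x) = zmul p a (zp_div_pow p e x)"
proof (rule zp_div_pow_eqI)
  have "zmul p (zpow p e) (zmul p a (zp_div_pow p e x)) = zmul p a (zmul p (zpow p e) (zp_div_pow p e x))"
    by (rule ext) (simp only: zp_levels mod_simps; simp add: algebra_simps)
  then show "zmul p a x = zmul p (zpow p e) (zmul p a (zp_div_pow p e x))"
    using zpow_mult_div_pow assms by simp
qed (use assms in simp)

lemma Zp_nonzero_level:
  assumes "x \<in> Zp p" "x \<noteq> zzero"
  shows "\<exists>n. x (Suc n) \<noteq> 0"
proof -
  obtain m where "x m \<noteq> 0"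
    using assms(2) by (auto simp: zzero_def)
  moreover have "m \<noteq> 0"
    using calculation Zp_0[OF assms(1)] by (cases m) auto
  ultimately show ?thesis
    by (cases m) auto
qed

lemma zval_eq_1D:
  assumes "x \<in> Zp p" "zval p x = 1"
  shows "zp_dvd p 1 x" "\<not> zp_dvd p 2 x"
proof -
  have nz: "x \<noteq> zzero"
    using assms(2) by (auto simp: zval_def)
  then have L: "(LEAST n. x (Suc n) \<noteq> 0) = 1"
    using assms(2) by (simp add: zval_def one_enat_def)
  have "x (Suc (LEAST n. x (Suc n) \<noteq> 0)) \<noteq> 0"
    using Zp_nonzero_level[OF assms(1) nz] by (rule LeastI_ex)
  then show "\<not> zp_dvd p 2 x"
    by (simp add: L zp_dvd_def numeral_2_eq_2)
  have "\<not> x (Suc 0) \<noteq> 0"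
    by (rule not_less_Least) (simp add: L)
  then show "zp_dvd p 1 x"
    by (simp add: zp_dvd_def)
qed

lemma zval_eq_1E:
  assumes "x \<in> Zp p" "zval p x = 1"
  obtains u where "zp_unit p u" "x = zmul p (zpow p 1) u"
  using zp_unit_factor[OF assms(1) zval_eq_1D[OF assms]] by blast

lemma zval_ge_1D:
  assumes "zval p x \<ge> 1"
  shows "zp_dvd p 1 x"
proof (cases "x = zzero")
  case False
  then have "(LEAST n. x (Suc n) \<noteq> 0) \<ge> 1"
    using assms by (simp add: zval_def one_enat_def)
  then have "\<not> x (Suc 0) \<noteq> 0"
    by (intro not_less_Least) simp
  then show ?thesis
    by (simp add: zp_dvd_def)
qed simp

lemma zval_eq_0D:
  assumes "x \<in> Zp p" "zval p x = 0"
  shows "zp_unit p x"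
proof -
  have nz: "x \<noteq> zzero"
    using assms(2) by (auto simp: zval_def)
  then have L: "(LEAST n. x (Suc n) \<noteq> 0) = 0"
    using assms(2) by (simp add: zval_def zero_enat_def)
  have "x (Suc (LEAST n. x (Suc n) \<noteq> 0)) \<noteq> 0"
    using Zp_nonzero_level[OF assms(1) nz] by (rule LeastI_ex)
  then show ?thesis
    using assms(1) by (simp add: L zp_unit_def)
qed

lemma zpow_neq_zzero: "zpow p s \<noteq> zzero"
proof
  assume "zpow p s = zzero"
  then have "zpow p s (Suc s) = 0"
    by (simp add: zzero_def)
  then show False
    using p_gt_1 by (simp add: zp_levels)
qed

lemma zp_unit_two:
  assumes "p \<noteq> 2"
  shows "zp_unit p (zof_int p 2)"
proof -
  have "3 \<le> p"
    using assms p_gt_1 by simp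
  then have "(2::int) mod int p = 2"
    by simp
  then show ?thesis
    by (simp add: zp_unit_def zp_levels)
qed

lemma zp_unit_four:
  assumes "p \<noteq> 2"
  shows "zp_unit p (zof_int p 4)"
proof -
  have "zmul p (zof_int p 2) (zof_int p 2) = zof_int p 4"
    by (rule Zp_eqI; simp; simp only: zp_levels mod_simps; simp)
  then show ?thesis
    using zp_unit_zmul[OF zp_unit_two[OF assms] zp_unit_two[OF assms]] by simp
qed

lemma zhalf:
  assumes "p \<noteq> 2"
  shows "zhalf p \<in> Zp p" "zmul p (zof_int p 2) (zhalf p) = zone p"
proof -
  have "odd p"
    using assms p_gt_1 prime_p prime_odd_nat by simp
  then have "even (int p - 1)"
    by simp
  then obtain q where q: "int p - 1 = 2 * q"
    by (rule evenE)
  have twice: "2 * ((int p ^ m + 1) div 2) = int p ^ m + 1" for m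
  proof -
    have "even (int p ^ m + 1)"
      using \<open>odd p\<close> by simp
    then show ?thesis
      by (rule even_two_times_div_two)
  qed
  show "zhalf p \<in> Zp p"
    unfolding zhalf_def
  proof (rule ZpI[where X = "\<lambda>m. (int p ^ m + 1) div 2"])
    fix m
    have "2 * ((int p ^ Suc m + 1) div 2 - (int p ^ m + 1) div 2) = int p ^ m * (int p - 1)"
      using twice[of m] twice[of "Suc m"] by (simp add: algebra_simps)
    then have "(int p ^ Suc m + 1) div 2 - (int p ^ m + 1) div 2 = int p ^ m * q"
      unfolding q by simp
    then show "(int p ^ Suc m + 1) div 2 mod int p ^ m = (int p ^ m + 1) div 2 mod int p ^ m"
      by (simp add: mod_eq_dvd_iff)
  qed simp
  show "zmul p (zof_int p 2) (zhalf p) = zone p"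
    by (rule ext) (simp add: zp_levels zhalf_def mod_simps twice)
qed

end

section \<open>Three-dimensional lattices with an abelian ideal of rank two\<close>

definition zlin :: "nat \<Rightarrow> zp \<Rightarrow> zp \<Rightarrow> zp \<Rightarrow> zp \<Rightarrow> zp" where
  "zlin p a b x y = zadd p (zmul p a x) (zmul p b y)"

definition sublattice :: "nat \<Rightarrow> nat \<Rightarrow> nat \<Rightarrow> zp \<Rightarrow> zvec set" where
  "sublattice p E1 E2 t =
     {v \<in> lat p 3. zp_dvd p E1 (v 1) \<and> zp_dvd p E2 (zadd p (zmul p t (v 1)) (v 2))}"

definition sublattice_residue :: "nat \<Rightarrow> nat \<Rightarrow> nat \<Rightarrow> zp \<Rightarrow> zvec \<Rightarrow> int \<times> int" where
  "sublattice_residue p E1 E2 t v = (v 1 E1, zadd p (zmul p t (v 1)) (v 2) E2)"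

context padic
begin

lemma zlin_Zp [simp]:
  "a \<in> Zp p \<Longrightarrow> b \<in> Zp p \<Longrightarrow> x \<in> Zp p \<Longrightarrow> y \<in> Zp p \<Longrightarrow> zlin p a b x y \<in> Zp p"
  by (simp add: zlin_def)

lemma mkv3_simps [simp]:
  "mkv3 a b c 0 = a" "mkv3 a b c (Suc 0) = b" "mkv3 a b c 1 = b" "mkv3 a b c 2 = c"
  "3 \<le> i \<Longrightarrow> mkv3 a b c i = zzero"
  by (simp_all add: mkv3_def)

lemma mkv3_in_lat [simp]: "mkv3 a b c \<in> lat p 3 \<longleftrightarrow> a \<in> Zp p \<and> b \<in> Zp p \<and> c \<in> Zp p"
proof
  assume "mkv3 a b c \<in> lat p 3"
  then have "\<forall>i<3. mkv3 a b c i \<in> Zp p"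
    by (simp add: lat_def)
  then have "mkv3 a b c 0 \<in> Zp p" "mkv3 a b c 1 \<in> Zp p" "mkv3 a b c 2 \<in> Zp p"
    by (auto simp del: mkv3_simps)
  then show "a \<in> Zp p \<and> b \<in> Zp p \<and> c \<in> Zp p"
    by simp
qed (auto simp: lat_def mkv3_def)

lemma lat3_eq_mkv3: "v \<in> lat p 3 \<Longrightarrow> v = mkv3 (v 0) (v 1) (v 2)"
  by (rule ext) (auto simp: lat_def mkv3_def less_Suc_eq numeral_3_eq_3)

lemma lat3_Zp: "v \<in> lat p 3 \<Longrightarrow> v 0 \<in> Zp p \<and> v 1 \<in> Zp p \<and> v 2 \<in> Zp p"
  by (simp add: lat_def)

lemma lat3_cases:
  assumes "v \<in> lat p 3"
  obtains a b c where "v = mkv3 a b c" "a \<in> Zp p" "b \<in> Zp p" "c \<in> Zp p"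
  using lat3_eq_mkv3[OF assms] lat3_Zp[OF assms] by blast

lemma mkv3_eq_iff [simp]: "mkv3 a b c = mkv3 a' b' c' \<longleftrightarrow> a = a' \<and> b = b' \<and> c = c'"
  by (metis mkv3_simps(1,3,4))

lemma zzero_simps [simp]:
  "zadd p zzero zzero = zzero" "zmul p a zzero = zzero" "zmul p zzero a = zzero"
  "zneg p zzero = zzero"
  by (simp_all add: zadd_def zmul_def zneg_def zzero_def)

lemma vzero_mkv3: "vzero = mkv3 zzero zzero zzero"
  by (auto simp: vzero_def mkv3_def)

lemma vadd_mkv3 [simp]:
  "vadd p (mkv3 a b c) (mkv3 a' b' c') = mkv3 (zadd p a a') (zadd p b b') (zadd p c c')"
  by (rule ext) (simp add: vadd_def mkv3_def)

lemma vsmul_mkv3 [simp]: "vsmul p s (mkv3 a b c) = mkv3 (zmul p s a) (zmul p s b) (zmul p s c)"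
  by (rule ext) (simp add: vsmul_def mkv3_def)

lemma vneg_mkv3 [simp]: "vneg p (mkv3 a b c) = mkv3 (zneg p a) (zneg p b) (zneg p c)"
  by (rule ext) (simp add: vneg_def mkv3_def)

lemma br_str3_component:
  assumes "k < 3"
  shows "br p 3 (str3 p w1 w2) u v k =
    zadd p (zadd p (zmul p (zmul p (u 0) (v 1)) (w1 k)) (zmul p (zmul p (u 1) (v 0)) (zneg p (w1 k))))
           (zadd p (zmul p (zmul p (u 0) (v 2)) (w2 k)) (zmul p (zmul p (u 2) (v 0)) (zneg p (w2 k))))"
proof
  fix m
  have sum3: "(\<Sum>i<3. \<Sum>j<3. f i j) =
      f 0 0 + f 0 1 + f 0 2 + f 1 0 + f 1 1 + f 1 2 + f 2 0 + f 2 1 + f 2 2"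
    for f :: "nat \<Rightarrow> nat \<Rightarrow> int"
    by (simp add: numeral_3_eq_3 numeral_2_eq_2 lessThan_Suc)
  show "br p 3 (str3 p w1 w2) u v k m = zadd p
      (zadd p (zmul p (zmul p (u 0) (v 1)) (w1 k)) (zmul p (zmul p (u 1) (v 0)) (zneg p (w1 k))))
      (zadd p (zmul p (zmul p (u 0) (v 2)) (w2 k)) (zmul p (zmul p (u 2) (v 0)) (zneg p (w2 k)))) m"
    using assms
    by (simp add: br_def sum3 str3_def vneg_def vzero_def zzero_def;
        simp only: zadd_def zmul_def mod_simps; simp add: algebra_simps)
qed

lemma br_str3:
  assumes "w1 0 = zzero" "w2 0 = zzero"
  shows "br p 3 (str3 p w1 w2) u v =
    mkv3 zzero
      (zsub p (zmul p (u 0) (zlin p (w1 1) (w2 1) (v 1) (v 2)))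
              (zmul p (v 0) (zlin p (w1 1) (w2 1) (u 1) (u 2))))
      (zsub p (zmul p (u 0) (zlin p (w1 2) (w2 2) (v 1) (v 2)))
              (zmul p (v 0) (zlin p (w1 2) (w2 2) (u 1) (u 2))))"
proof
  fix k :: nat
  consider "k = 0" | "k = 1 \<or> k = 2" | "3 \<le> k"
    by linarith
  then show "br p 3 (str3 p w1 w2) u v k = mkv3 zzero
      (zsub p (zmul p (u 0) (zlin p (w1 1) (w2 1) (v 1) (v 2)))
              (zmul p (v 0) (zlin p (w1 1) (w2 1) (u 1) (u 2))))
      (zsub p (zmul p (u 0) (zlin p (w1 2) (w2 2) (v 1) (v 2)))
              (zmul p (v 0) (zlin p (w1 2) (w2 2) (u 1) (u 2)))) k"
  proof cases
    case 1
    then show ?thesis by (simp add: br_str3_component assms)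
  next
    case 2
    then show ?thesis
      by (auto simp: br_str3_component zsub_def zlin_def intro!: ext;
          simp only: zp_levels mod_simps; simp add: algebra_simps)
  next
    case 3
    then show ?thesis by (simp add: br_def)
  qed
qed

lemma zp_dvd_zsub_iff:
  assumes "x \<in> Zp p" "y \<in> Zp p"
  shows "zp_dvd p e (zsub p y x) \<longleftrightarrow> y e = x e"
proof -
  have "zp_dvd p e (zsub p y x) \<longleftrightarrow> (y e - x e) mod int p ^ e = 0"
    by (simp add: zp_dvd_def zsub_def zp_levels mod_simps)
  also have "\<dots> \<longleftrightarrow> y e mod int p ^ e = x e mod int p ^ e"
    by (simp add: mod_eq_dvd_iff dvd_eq_mod_eq_0)
  finally show ?thesis
    using assms by simp
qed

lemma sublattice_coset_iff:
  assumes "t \<in> Zp p" "x \<in> lat p 3" "y \<in> lat p 3"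
  shows "vadd p y (vneg p x) \<in> sublattice p E1 E2 t \<longleftrightarrow>
    sublattice_residue p E1 E2 t y = sublattice_residue p E1 E2 t x"
proof -
  obtain x0 x1 x2 where x: "x = mkv3 x0 x1 x2" "x0 \<in> Zp p" "x1 \<in> Zp p" "x2 \<in> Zp p"
    using lat3_cases[OF assms(2)] by metis
  obtain y0 y1 y2 where y: "y = mkv3 y0 y1 y2" "y0 \<in> Zp p" "y1 \<in> Zp p" "y2 \<in> Zp p"
    using lat3_cases[OF assms(3)] by metis
  have "zadd p (zmul p t (zadd p y1 (zneg p x1))) (zadd p y2 (zneg p x2)) =
      zsub p (zadd p (zmul p t y1) y2) (zadd p (zmul p t x1) x2)"
    by (rule ext) (simp only: zsub_def zp_levels mod_simps; simp add: algebra_simps)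
  then show ?thesis
    using x y assms(1)
    by (simp add: sublattice_def sublattice_residue_def zp_dvd_zsub_iff flip: zsub_def)
qed

lemma sublattice_residue_image:
  assumes "t \<in> Zp p"
  shows "sublattice_residue p E1 E2 t ` lat p 3 = {0..<int p ^ E1} \<times> {0..<int p ^ E2}"
proof (intro equalityI subsetI)
  fix z
  assume "z \<in> sublattice_residue p E1 E2 t ` lat p 3"
  then obtain v where v: "v \<in> lat p 3" "z = sublattice_residue p E1 E2 t v"
    by blast
  then have "v 1 \<in> Zp p" "zadd p (zmul p t (v 1)) (v 2) \<in> Zp p"
    using lat3_Zp[OF v(1)] assms by auto
  then show "z \<in> {0..<int p ^ E1} \<times> {0..<int p ^ E2}"
    using ZpD v(2) by (auto simp: sublattice_residue_def)
next
  fix z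
  assume "z \<in> {0..<int p ^ E1} \<times> {0..<int p ^ E2}"
  then obtain a b where z: "z = (a, b)" "0 \<le> a" "a < int p ^ E1" "0 \<le> b" "b < int p ^ E2"
    by auto
  let ?v = "mkv3 zzero (zof_int p a) (zof_int p (b - t E2 * a))"
  have "sublattice_residue p E1 E2 t ?v = (a, b)"
    using z Zp_mod[OF assms, of E2]
    by (simp add: sublattice_residue_def zp_levels mod_simps del: Zp_mod)
  moreover have "?v \<in> lat p 3"
    by simp
  ultimately show "z \<in> sublattice_residue p E1 E2 t ` lat p 3"
    unfolding z by (metis image_eqI)
qed

lemma submod_sublattice:
  assumes "t \<in> Zp p"
  shows "submod p 3 (sublattice p E1 E2 t)"
  unfolding submod_def
proof (intro conjI ballI)
  show "sublattice p E1 E2 t \<subseteq> lat p 3"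
    by (auto simp: sublattice_def)
  show "vzero \<in> sublattice p E1 E2 t"
    using assms by (simp add: sublattice_def vzero_mkv3)
next
  fix u v
  assume "u \<in> sublattice p E1 E2 t" "v \<in> sublattice p E1 E2 t"
  then obtain u0 u1 u2 v0 v1 v2 where u: "u = mkv3 u0 u1 u2" "u0 \<in> Zp p" "u1 \<in> Zp p" "u2 \<in> Zp p"
      "zp_dvd p E1 u1" "zp_dvd p E2 (zadd p (zmul p t u1) u2)"
    and v: "v = mkv3 v0 v1 v2" "v0 \<in> Zp p" "v1 \<in> Zp p" "v2 \<in> Zp p"
      "zp_dvd p E1 v1" "zp_dvd p E2 (zadd p (zmul p t v1) v2)"
    by (auto simp: sublattice_def elim!: lat3_cases)
  have "zadd p (zmul p t (zadd p u1 v1)) (zadd p u2 v2) =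
      zadd p (zadd p (zmul p t u1) u2) (zadd p (zmul p t v1) v2)"
    by (rule ext) (simp only: zp_levels mod_simps; simp add: algebra_simps)
  then show "vadd p u v \<in> sublattice p E1 E2 t"
    using u v by (simp add: sublattice_def zp_dvd_zadd)
next
  fix s u
  assume "s \<in> Zp p" "u \<in> sublattice p E1 E2 t"
  then obtain u0 u1 u2 where u: "u = mkv3 u0 u1 u2" "u0 \<in> Zp p" "u1 \<in> Zp p" "u2 \<in> Zp p"
      "zp_dvd p E1 u1" "zp_dvd p E2 (zadd p (zmul p t u1) u2)"
    by (auto simp: sublattice_def elim!: lat3_cases)
  have "zadd p (zmul p t (zmul p s u1)) (zmul p s u2) = zmul p s (zadd p (zmul p t u1) u2)"
    by (rule ext) (simp only: zp_levels mod_simps; simp add: algebra_simps)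
  then show "vsmul p s u \<in> sublattice p E1 E2 t"
    using u \<open>s \<in> Zp p\<close> by (simp add: sublattice_def zp_dvd_zmul)
qed

lemma lat_index_sublattice:
  assumes "t \<in> Zp p"
  shows "lat_index p 3 (sublattice p E1 E2 t) = p ^ (E1 + E2)"
proof -
  let ?r = "sublattice_residue p E1 E2 t"
  let ?fibre = "\<lambda>z. {y \<in> lat p 3. ?r y = z}"
  have cosets: "(\<lambda>x. {y \<in> lat p 3. vadd p y (vneg p x) \<in> sublattice p E1 E2 t}) ` lat p 3
      = ?fibre ` (?r ` lat p 3)"
  proof -
    have "{y \<in> lat p 3. vadd p y (vneg p x) \<in> sublattice p E1 E2 t} = ?fibre (?r x)"
      if "x \<in> lat p 3" for x
      using sublattice_coset_iff[OF assms that] by auto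
    then show ?thesis
      by (auto simp: image_iff)
  qed
  have "inj_on ?fibre (?r ` lat p 3)"
    by (rule inj_onI) blast
  then have "lat_index p 3 (sublattice p E1 E2 t) = card (?r ` lat p 3)"
    unfolding lat_index_def cosets by (rule card_image)
  also have "\<dots> = nat (int p ^ E1) * nat (int p ^ E2)"
    unfolding sublattice_residue_image[OF assms] by (simp add: card_cartesian_product)
  also have "\<dots> = p ^ (E1 + E2)"
    by (simp add: power_add nat_mult_distrib nat_power_eq)
  finally show ?thesis .
qed

end

section \<open>Virtual endomorphisms from stable sublattices\<close>

text \<open>For \<open>d1, d2 \<in> \<int>\<^sub>p\<close>, \<open>tcoord1 p E1 d1\<close> and \<open>tcoord2 p E1 E2 t d1 d2\<close> are the
  \<open>x\<^sub>1\<close>- and \<open>x\<^sub>2\<close>-coordinates of \<open>d1 p^E1 (x\<^sub>1 - t x\<^sub>2) + d2 p^E2 x\<^sub>2\<close>; these vectors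
  are exactly the \<open>\<langle>x\<^sub>1, x\<^sub>2\<rangle>\<close>-parts of the elements of \<open>sublattice p E1 E2 t\<close>.\<close>

definition tcoord1 :: "nat \<Rightarrow> nat \<Rightarrow> zp \<Rightarrow> zp" where
  "tcoord1 p E1 d1 = zmul p (zpow p E1) d1"

definition tcoord2 :: "nat \<Rightarrow> nat \<Rightarrow> nat \<Rightarrow> zp \<Rightarrow> zp \<Rightarrow> zp \<Rightarrow> zp" where
  "tcoord2 p E1 E2 t d1 d2 = zsub p (zmul p (zpow p E2) d2) (zmul p t (tcoord1 p E1 d1))"

text \<open>Let \<open>W\<close> be the matrix of \<open>ad x\<^sub>0\<close> on \<open>\<langle>x\<^sub>1, x\<^sub>2\<rangle>\<close>, \<open>T\<close> the map \<open>d \<mapsto> (tcoord1, tcoord2)\<close>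
  and \<open>N\<close> the matrix \<open>(m\<^sub>i\<^sub>j)\<close>. Closedness says \<open>W T d = T e\<close> for some \<open>e\<close> (the
  sublattice is \<open>ad x\<^sub>0\<close>-stable) with \<open>N e = sg W N d\<close> (so \<open>T d \<mapsto> N d\<close>, together with
  \<open>x\<^sub>0 \<mapsto> sg x\<^sub>0\<close>, respects brackets). Contraction says that whenever \<open>T d \<mapsto> N d = T d'\<close>
  and \<open>N d'\<close> is divisible by \<open>p^r\<close>, then \<open>T d\<close> is divisible by \<open>p^(r+1)\<close>.\<close>

definition ve_closed ::
    "nat \<Rightarrow> zvec \<Rightarrow> zvec \<Rightarrow> nat \<Rightarrow> nat \<Rightarrow> zp \<Rightarrow> zp \<Rightarrow> zp \<Rightarrow> zp \<Rightarrow> zp \<Rightarrow> zp \<Rightarrow> bool" where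
  "ve_closed p w1 w2 E1 E2 t sg m11 m12 m21 m22 \<longleftrightarrow>
     (\<forall>d1\<in>Zp p. \<forall>d2\<in>Zp p. \<exists>e1\<in>Zp p. \<exists>e2\<in>Zp p.
        zlin p (w1 1) (w2 1) (tcoord1 p E1 d1) (tcoord2 p E1 E2 t d1 d2) = tcoord1 p E1 e1 \<and>
        zlin p (w1 2) (w2 2) (tcoord1 p E1 d1) (tcoord2 p E1 E2 t d1 d2) = tcoord2 p E1 E2 t e1 e2 \<and>
        zlin p m11 m12 e1 e2 =
          zmul p sg (zlin p (w1 1) (w2 1) (zlin p m11 m12 d1 d2) (zlin p m21 m22 d1 d2)) \<and>
        zlin p m21 m22 e1 e2 =
          zmul p sg (zlin p (w1 2) (w2 2) (zlin p m11 m12 d1 d2) (zlin p m21 m22 d1 d2)))"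

definition ve_contracting :: "nat \<Rightarrow> nat \<Rightarrow> nat \<Rightarrow> zp \<Rightarrow> zp \<Rightarrow> zp \<Rightarrow> zp \<Rightarrow> zp \<Rightarrow> bool" where
  "ve_contracting p E1 E2 t m11 m12 m21 m22 \<longleftrightarrow>
     (\<forall>d1 d2 d1' d2' r. d1 \<in> Zp p \<and> d2 \<in> Zp p \<and> d1' \<in> Zp p \<and> d2' \<in> Zp p \<and>
        tcoord1 p E1 d1' = zlin p m11 m12 d1 d2 \<and> tcoord2 p E1 E2 t d1' d2' = zlin p m21 m22 d1 d2 \<and>
        zp_dvd p r (zlin p m11 m12 d1' d2') \<and> zp_dvd p r (zlin p m21 m22 d1' d2') \<longrightarrow>
        zp_dvd p (Suc r) (tcoord1 p E1 d1) \<and> zp_dvd p (Suc r) (tcoord2 p E1 E2 t d1 d2))"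

lemma ve_closedI:
  assumes "\<And>d1 d2. d1 \<in> Zp p \<Longrightarrow> d2 \<in> Zp p \<Longrightarrow> f d1 d2 \<in> Zp p \<and> g d1 d2 \<in> Zp p"
    and "\<And>d1 d2. d1 \<in> Zp p \<Longrightarrow> d2 \<in> Zp p \<Longrightarrow>
      zlin p (w1 1) (w2 1) (tcoord1 p E1 d1) (tcoord2 p E1 E2 t d1 d2) = tcoord1 p E1 (f d1 d2) \<and>
      zlin p (w1 2) (w2 2) (tcoord1 p E1 d1) (tcoord2 p E1 E2 t d1 d2) =
        tcoord2 p E1 E2 t (f d1 d2) (g d1 d2) \<and>
      zlin p m11 m12 (f d1 d2) (g d1 d2) =
        zmul p sg (zlin p (w1 1) (w2 1) (zlin p m11 m12 d1 d2) (zlin p m21 m22 d1 d2)) \<and>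
      zlin p m21 m22 (f d1 d2) (g d1 d2) =
        zmul p sg (zlin p (w1 2) (w2 2) (zlin p m11 m12 d1 d2) (zlin p m21 m22 d1 d2))"
  shows "ve_closed p w1 w2 E1 E2 t sg m11 m12 m21 m22"
  unfolding ve_closed_def using assms by blast

lemma ve_contractingI:
  assumes "\<And>d1 d2 d1' d2' r. d1 \<in> Zp p \<Longrightarrow> d2 \<in> Zp p \<Longrightarrow> d1' \<in> Zp p \<Longrightarrow> d2' \<in> Zp p \<Longrightarrow>
      tcoord1 p E1 d1' = zlin p m11 m12 d1 d2 \<Longrightarrow> tcoord2 p E1 E2 t d1' d2' = zlin p m21 m22 d1 d2 \<Longrightarrow>
      zp_dvd p r (zlin p m11 m12 d1' d2') \<Longrightarrow> zp_dvd p r (zlin p m21 m22 d1' d2') \<Longrightarrow>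
      zp_dvd p (Suc r) (tcoord1 p E1 d1) \<and> zp_dvd p (Suc r) (tcoord2 p E1 E2 t d1 d2)"
  shows "ve_contracting p E1 E2 t m11 m12 m21 m22"
  unfolding ve_contracting_def using assms by blast

context padic
begin

lemma tcoord_Zp [simp]:
  "d1 \<in> Zp p \<Longrightarrow> tcoord1 p E1 d1 \<in> Zp p"
  "t \<in> Zp p \<Longrightarrow> d1 \<in> Zp p \<Longrightarrow> d2 \<in> Zp p \<Longrightarrow> tcoord2 p E1 E2 t d1 d2 \<in> Zp p"
  by (simp_all add: tcoord1_def tcoord2_def)

lemma tcoord_combination:
  "zadd p (zmul p t (tcoord1 p E1 d1)) (tcoord2 p E1 E2 t d1 d2) = zmul p (zpow p E2) d2"
  by (rule ext) (simp only: tcoord2_def zsub_def zp_levels mod_simps; simp add: algebra_simps)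

end

locale str3_ve = padic +
  fixes w1 w2 :: zvec and E1 E2 :: nat and t sg m11 m12 m21 m22 :: zp
  assumes w_lat: "w1 \<in> lat p 3" "w2 \<in> lat p 3"
    and w_0: "w1 0 = zzero" "w2 0 = zzero"
    and params_Zp [simp]: "t \<in> Zp p" "sg \<in> Zp p" "m11 \<in> Zp p" "m12 \<in> Zp p" "m21 \<in> Zp p" "m22 \<in> Zp p"
    and closed: "ve_closed p w1 w2 E1 E2 t sg m11 m12 m21 m22"
    and contracting: "ve_contracting p E1 E2 t m11 m12 m21 m22"
    and action_nonzero: "w1 1 \<noteq> zzero \<or> w1 2 \<noteq> zzero \<or> w2 1 \<noteq> zzero \<or> w2 2 \<noteq> zzero"
begin

lemma w_Zp [simp]:
  "w1 1 \<in> Zp p" "w1 2 \<in> Zp p" "w2 1 \<in> Zp p" "w2 2 \<in> Zp p"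
  "w1 (Suc 0) \<in> Zp p" "w2 (Suc 0) \<in> Zp p"
  using lat3_Zp w_lat by auto

definition mvec :: "zp \<Rightarrow> zp \<Rightarrow> zp \<Rightarrow> zvec" where
  "mvec a d1 d2 = mkv3 a (tcoord1 p E1 d1) (tcoord2 p E1 E2 t d1 d2)"

definition mcoord1 :: "zvec \<Rightarrow> zp" where
  "mcoord1 v = zp_div_pow p E1 (v 1)"

definition mcoord2 :: "zvec \<Rightarrow> zp" where
  "mcoord2 v = zp_div_pow p E2 (zadd p (zmul p t (v 1)) (v 2))"

definition phi :: "zvec \<Rightarrow> zvec" where
  "phi v = mkv3 (zmul p sg (v 0))
     (zlin p m11 m12 (mcoord1 v) (mcoord2 v)) (zlin p m21 m22 (mcoord1 v) (mcoord2 v))"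

lemma mvec_in_sublattice:
  assumes "a \<in> Zp p" "d1 \<in> Zp p" "d2 \<in> Zp p"
  shows "mvec a d1 d2 \<in> sublattice p E1 E2 t"
  using assms zp_dvd_zpow_mult[of d1 0 E1 E1] zp_dvd_zpow_mult[of d2 0 E2 E2]
  by (simp add: sublattice_def mvec_def tcoord_combination) (simp add: tcoord1_def)

lemma mcoord_mvec:
  assumes "d1 \<in> Zp p" "d2 \<in> Zp p"
  shows "mcoord1 (mvec a d1 d2) = d1" "mcoord2 (mvec a d1 d2) = d2"
  using assms
  by (simp_all add: mcoord1_def mcoord2_def mvec_def tcoord_combination)
    (simp_all add: zp_div_pow_eqI tcoord1_def)

lemma sublattice_mvec:
  assumes "v \<in> sublattice p E1 E2 t"
  shows "v = mvec (v 0) (mcoord1 v) (mcoord2 v)"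
    and "v 0 \<in> Zp p" "mcoord1 v \<in> Zp p" "mcoord2 v \<in> Zp p"
proof -
  have v: "v \<in> lat p 3" "zp_dvd p E1 (v 1)" "zp_dvd p E2 (zadd p (zmul p t (v 1)) (v 2))"
    using assms by (auto simp: sublattice_def)
  have vZ: "v 0 \<in> Zp p" "v 1 \<in> Zp p" "v (Suc 0) \<in> Zp p" "v 2 \<in> Zp p"
    using lat3_Zp[OF v(1)] by auto
  show "v 0 \<in> Zp p" "mcoord1 v \<in> Zp p" "mcoord2 v \<in> Zp p"
    using vZ v by (simp_all add: mcoord1_def mcoord2_def)
  have c1: "tcoord1 p E1 (mcoord1 v) = v 1"
    unfolding tcoord1_def mcoord1_def by (rule zpow_mult_div_pow) (use vZ v in auto)
  have "zmul p (zpow p E2) (mcoord2 v) = zadd p (zmul p t (v 1)) (v 2)"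
    unfolding mcoord2_def by (rule zpow_mult_div_pow) (use vZ v in auto)
  then have "tcoord2 p E1 E2 t (mcoord1 v) (mcoord2 v) = zsub p (zadd p (zmul p t (v 1)) (v 2)) (zmul p t (v 1))"
    by (simp add: tcoord2_def c1)
  also have "\<dots> = v 2"
    by (rule Zp_eqI) (simp_all add: vZ zsub_def zp_levels mod_simps)
  finally show "v = mvec (v 0) (mcoord1 v) (mcoord2 v)"
    using lat3_eq_mkv3[OF v(1)] c1 by (simp add: mvec_def)
qed

lemma sublattice_cases:
  assumes "v \<in> sublattice p E1 E2 t"
  obtains a d1 d2 where "v = mvec a d1 d2" "a \<in> Zp p" "d1 \<in> Zp p" "d2 \<in> Zp p"
  using sublattice_mvec[OF assms] by blast

lemma phi_mvec:
  assumes "d1 \<in> Zp p" "d2 \<in> Zp p"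
  shows "phi (mvec a d1 d2) = mkv3 (zmul p sg a) (zlin p m11 m12 d1 d2) (zlin p m21 m22 d1 d2)"
  using assms by (simp add: phi_def mcoord_mvec) (simp add: mvec_def)

lemma vadd_mvec:
  "vadd p (mvec a d1 d2) (mvec a' d1' d2') = mvec (zadd p a a') (zadd p d1 d1') (zadd p d2 d2')"
  by (simp add: mvec_def tcoord1_def tcoord2_def zsub_def, intro conjI ext;
      simp only: zp_levels mod_simps; simp add: algebra_simps)

lemma vsmul_mvec: "vsmul p s (mvec a d1 d2) = mvec (zmul p s a) (zmul p s d1) (zmul p s d2)"
  by (simp add: mvec_def tcoord1_def tcoord2_def zsub_def, intro conjI ext;
      simp only: zp_levels mod_simps; simp add: algebra_simps)

lemma closedE:
  assumes "d1 \<in> Zp p" "d2 \<in> Zp p"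
  obtains e1 e2 where "e1 \<in> Zp p" "e2 \<in> Zp p"
    "zlin p (w1 1) (w2 1) (tcoord1 p E1 d1) (tcoord2 p E1 E2 t d1 d2) = tcoord1 p E1 e1"
    "zlin p (w1 2) (w2 2) (tcoord1 p E1 d1) (tcoord2 p E1 E2 t d1 d2) = tcoord2 p E1 E2 t e1 e2"
    "zlin p m11 m12 e1 e2 = zmul p sg (zlin p (w1 1) (w2 1) (zlin p m11 m12 d1 d2) (zlin p m21 m22 d1 d2))"
    "zlin p m21 m22 e1 e2 = zmul p sg (zlin p (w1 2) (w2 2) (zlin p m11 m12 d1 d2) (zlin p m21 m22 d1 d2))"
  using closed assms unfolding ve_closed_def by blast

lemma br_mvec:
  assumes "zlin p (w1 1) (w2 1) (tcoord1 p E1 d1) (tcoord2 p E1 E2 t d1 d2) = tcoord1 p E1 e1"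
    and "zlin p (w1 2) (w2 2) (tcoord1 p E1 d1) (tcoord2 p E1 E2 t d1 d2) = tcoord2 p E1 E2 t e1 e2"
    and "zlin p (w1 1) (w2 1) (tcoord1 p E1 d1') (tcoord2 p E1 E2 t d1' d2') = tcoord1 p E1 e1'"
    and "zlin p (w1 2) (w2 2) (tcoord1 p E1 d1') (tcoord2 p E1 E2 t d1' d2') = tcoord2 p E1 E2 t e1' e2'"
  shows "br p 3 (str3 p w1 w2) (mvec a d1 d2) (mvec a' d1' d2') =
    mvec zzero (zsub p (zmul p a e1') (zmul p a' e1)) (zsub p (zmul p a e2') (zmul p a' e2))"
  unfolding br_str3[of w1 w2, OF w_0] mvec_def mkv3_simps assms mkv3_eq_iff
  by (intro conjI ext; simp only: tcoord1_def tcoord2_def zsub_def zp_levels mod_simps;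
      simp add: algebra_simps)

lemma subalg_sublattice: "subalg p 3 (str3 p w1 w2) (sublattice p E1 E2 t)"
  unfolding subalg_def
proof (intro conjI ballI submod_sublattice params_Zp)
  fix u v
  assume "u \<in> sublattice p E1 E2 t" "v \<in> sublattice p E1 E2 t"
  then obtain a d1 d2 a' d1' d2'
    where u: "u = mvec a d1 d2" "a \<in> Zp p" "d1 \<in> Zp p" "d2 \<in> Zp p"
      and v: "v = mvec a' d1' d2'" "a' \<in> Zp p" "d1' \<in> Zp p" "d2' \<in> Zp p"
    by (metis sublattice_cases)
  obtain e1 e2 where e: "e1 \<in> Zp p" "e2 \<in> Zp p"
    "zlin p (w1 1) (w2 1) (tcoord1 p E1 d1) (tcoord2 p E1 E2 t d1 d2) = tcoord1 p E1 e1"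
    "zlin p (w1 2) (w2 2) (tcoord1 p E1 d1) (tcoord2 p E1 E2 t d1 d2) = tcoord2 p E1 E2 t e1 e2"
    using closedE[OF u(3,4)] by metis
  obtain e1' e2' where e': "e1' \<in> Zp p" "e2' \<in> Zp p"
    "zlin p (w1 1) (w2 1) (tcoord1 p E1 d1') (tcoord2 p E1 E2 t d1' d2') = tcoord1 p E1 e1'"
    "zlin p (w1 2) (w2 2) (tcoord1 p E1 d1') (tcoord2 p E1 E2 t d1' d2') = tcoord2 p E1 E2 t e1' e2'"
    using closedE[OF v(3,4)] by metis
  show "br p 3 (str3 p w1 w2) u v \<in> sublattice p E1 E2 t"
    unfolding u v br_mvec[OF e(3,4) e'(3,4)] using u v e e' by (simp add: mvec_in_sublattice)
qed

lemma phi_br: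
  assumes u: "a \<in> Zp p" "d1 \<in> Zp p" "d2 \<in> Zp p" and v: "a' \<in> Zp p" "d1' \<in> Zp p" "d2' \<in> Zp p"
  shows "phi (br p 3 (str3 p w1 w2) (mvec a d1 d2) (mvec a' d1' d2')) =
    br p 3 (str3 p w1 w2) (phi (mvec a d1 d2)) (phi (mvec a' d1' d2'))"
proof -
  obtain e1 e2 where e: "e1 \<in> Zp p" "e2 \<in> Zp p"
    "zlin p (w1 1) (w2 1) (tcoord1 p E1 d1) (tcoord2 p E1 E2 t d1 d2) = tcoord1 p E1 e1"
    "zlin p (w1 2) (w2 2) (tcoord1 p E1 d1) (tcoord2 p E1 E2 t d1 d2) = tcoord2 p E1 E2 t e1 e2"
    "zlin p m11 m12 e1 e2 = zmul p sg (zlin p (w1 1) (w2 1) (zlin p m11 m12 d1 d2) (zlin p m21 m22 d1 d2))"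
    "zlin p m21 m22 e1 e2 = zmul p sg (zlin p (w1 2) (w2 2) (zlin p m11 m12 d1 d2) (zlin p m21 m22 d1 d2))"
    using closedE[OF u(2,3)] by metis
  obtain e1' e2' where e': "e1' \<in> Zp p" "e2' \<in> Zp p"
    "zlin p (w1 1) (w2 1) (tcoord1 p E1 d1') (tcoord2 p E1 E2 t d1' d2') = tcoord1 p E1 e1'"
    "zlin p (w1 2) (w2 2) (tcoord1 p E1 d1') (tcoord2 p E1 E2 t d1' d2') = tcoord2 p E1 E2 t e1' e2'"
    "zlin p m11 m12 e1' e2' = zmul p sg (zlin p (w1 1) (w2 1) (zlin p m11 m12 d1' d2') (zlin p m21 m22 d1' d2'))"
    "zlin p m21 m22 e1' e2' = zmul p sg (zlin p (w1 2) (w2 2) (zlin p m11 m12 d1' d2') (zlin p m21 m22 d1' d2'))"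
    using closedE[OF v(2,3)] by metis
  have lin_zsub: "zlin p x y (zsub p (zmul p a e1') (zmul p a' e1)) (zsub p (zmul p a e2') (zmul p a' e2))
      = zsub p (zmul p a (zlin p x y e1' e2')) (zmul p a' (zlin p x y e1 e2))" for x y
    by (rule ext) (simp only: zlin_def zsub_def zp_levels mod_simps; simp add: algebra_simps)
  have "phi (br p 3 (str3 p w1 w2) (mvec a d1 d2) (mvec a' d1' d2')) =
      mkv3 zzero (zsub p (zmul p a (zlin p m11 m12 e1' e2')) (zmul p a' (zlin p m11 m12 e1 e2)))
                 (zsub p (zmul p a (zlin p m21 m22 e1' e2')) (zmul p a' (zlin p m21 m22 e1 e2)))"
    using u v e e' by (simp add: br_mvec[OF e(3,4) e'(3,4)] phi_mvec lin_zsub)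
  also have "\<dots> = br p 3 (str3 p w1 w2) (phi (mvec a d1 d2)) (phi (mvec a' d1' d2'))"
    unfolding br_str3[of w1 w2, OF w_0] phi_mvec[OF u(2,3)] phi_mvec[OF v(2,3)] e(5,6) e'(5,6)
    by (simp, intro conjI ext; simp only: zsub_def zp_levels mod_simps; simp add: algebra_simps)
  finally show ?thesis .
qed

lemma alg_hom_phi: "alg_hom_on p 3 (str3 p w1 w2) (sublattice p E1 E2 t) phi"
  unfolding alg_hom_on_def
proof (intro conjI ballI)
  fix u
  assume "u \<in> sublattice p E1 E2 t"
  then obtain a d1 d2 where u: "u = mvec a d1 d2" "a \<in> Zp p" "d1 \<in> Zp p" "d2 \<in> Zp p"
    by (metis sublattice_cases)
  show "phi u \<in> lat p 3"
    using u by (simp add: phi_mvec)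
  fix s
  assume "s \<in> Zp p"
  then show "phi (vsmul p s u) = vsmul p s (phi u)"
    using u by (simp add: vsmul_mvec phi_mvec, intro conjI ext;
        simp only: zlin_def zp_levels mod_simps; simp add: algebra_simps)
next
  fix u v
  assume "u \<in> sublattice p E1 E2 t" "v \<in> sublattice p E1 E2 t"
  then obtain a d1 d2 a' d1' d2'
    where u: "u = mvec a d1 d2" "a \<in> Zp p" "d1 \<in> Zp p" "d2 \<in> Zp p"
      and v: "v = mvec a' d1' d2'" "a' \<in> Zp p" "d1' \<in> Zp p" "d2' \<in> Zp p"
    by (metis sublattice_cases)
  show "phi (vadd p u v) = vadd p (phi u) (phi v)"
    using u v by (simp add: vadd_mvec phi_mvec, intro conjI ext;
        simp only: zlin_def zp_levels mod_simps; simp add: algebra_simps)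
  show "phi (br p 3 (str3 p w1 w2) u v) = br p 3 (str3 p w1 w2) (phi u) (phi v)"
    unfolding u v using phi_br u v by simp
qed

lemma vdom_x0_free_dvd:
  "z \<in> vdom p 3 (sublattice p E1 E2 t) phi (2 * n) \<Longrightarrow> z 0 = zzero \<Longrightarrow>
    zp_dvd p n (z 1) \<and> zp_dvd p n (z 2)"
proof (induction n arbitrary: z)
  case 0
  then show ?case
    using lat3_Zp by simp
next
  case (Suc n)
  have "2 * Suc n = Suc (Suc (2 * n))"
    by simp
  then have z: "z \<in> sublattice p E1 E2 t" "phi z \<in> sublattice p E1 E2 t"
      "phi (phi z) \<in> vdom p 3 (sublattice p E1 E2 t) phi (2 * n)"
    using Suc.prems(1) by auto
  obtain d1 d2 where d: "z = mvec zzero d1 d2" "d1 \<in> Zp p" "d2 \<in> Zp p"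
    using sublattice_mvec[OF z(1)] Suc.prems(2) by metis
  have phi_z: "phi z = mkv3 zzero (zlin p m11 m12 d1 d2) (zlin p m21 m22 d1 d2)"
    using d by (simp add: phi_mvec)
  obtain a' d1' d2' where d': "phi z = mvec a' d1' d2'" "d1' \<in> Zp p" "d2' \<in> Zp p"
    using sublattice_cases[OF z(2)] by metis
  have eqs: "a' = zzero" "tcoord1 p E1 d1' = zlin p m11 m12 d1 d2"
      "tcoord2 p E1 E2 t d1' d2' = zlin p m21 m22 d1 d2"
    using d'(1) by (simp_all add: phi_z mvec_def)
  have "phi (phi z) = mkv3 zzero (zlin p m11 m12 d1' d2') (zlin p m21 m22 d1' d2')"
    using d' by (simp add: eqs(1) phi_mvec)
  then have "zp_dvd p n (zlin p m11 m12 d1' d2') \<and> zp_dvd p n (zlin p m21 m22 d1' d2')"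
    using Suc.IH[OF z(3)] by simp
  then have "zp_dvd p (Suc n) (tcoord1 p E1 d1) \<and> zp_dvd p (Suc n) (tcoord2 p E1 E2 t d1 d2)"
    using contracting d d' eqs(2,3) unfolding ve_contracting_def by blast
  then show ?case
    by (simp add: d mvec_def)
qed

lemma vdom_x0_free_eq_vzero:
  assumes "\<And>j. z \<in> vdom p 3 (sublattice p E1 E2 t) phi j" "z 0 = zzero"
  shows "z = vzero"
proof -
  have z: "z \<in> lat p 3"
    using assms(1)[of 0] by simp
  have "zp_dvd p n (z 1) \<and> zp_dvd p n (z 2)" for n
    using vdom_x0_free_dvd assms by blast
  then have "z 1 = zzero" "z 2 = zzero"
    using zp_dvd_all_eq_zzero by blast+
  then show ?thesis
    using lat3_eq_mkv3[OF z] assms(2) by (simp add: vzero_mkv3)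
qed

lemma br_x0_free:
  "br p 3 (str3 p w1 w2) (mkv3 zzero b c) y =
    mkv3 zzero (zneg p (zmul p (y 0) (zlin p (w1 1) (w2 1) b c)))
               (zneg p (zmul p (y 0) (zlin p (w1 2) (w2 2) b c)))"
  unfolding br_str3[of w1 w2, OF w_0] mkv3_simps mkv3_eq_iff
  by (intro conjI ext; simp only: zsub_def zp_levels mod_simps; simp add: algebra_simps)

lemma centralizer_x0_free:
  assumes "y \<in> lat p 3" "\<And>x. x \<in> lat p 3 \<Longrightarrow> br p 3 (str3 p w1 w2) x y = vzero"
  shows "y 0 = zzero"
proof -
  have y0: "y 0 \<in> Zp p"
    using lat3_Zp[OF assms(1)] by simp
  have kill: "zmul p (y 0) (zlin p (w1 1) (w2 1) b c) = zzero \<and>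
      zmul p (y 0) (zlin p (w1 2) (w2 2) b c) = zzero" if "b \<in> Zp p" "c \<in> Zp p" for b c
  proof -
    have "zneg p (zmul p (y 0) (zlin p (w1 1) (w2 1) b c)) = zzero \<and>
        zneg p (zmul p (y 0) (zlin p (w1 2) (w2 2) b c)) = zzero"
      using assms(2)[of "mkv3 zzero b c"] that by (simp add: br_x0_free vzero_mkv3)
    moreover have "zneg p (zneg p x) = x" if "x \<in> Zp p" for x
      by (rule Zp_eqI) (simp_all add: that zp_levels mod_simps)
    ultimately show ?thesis
      using that y0 by (metis zmul_Zp zlin_Zp w_Zp zzero_simps(4))
  qed
  have "zlin p a b (zone p) zzero = a" "zlin p a b zzero (zone p) = b"
    if "a \<in> Zp p" "b \<in> Zp p" for a b
    by (rule Zp_eqI, simp_all add: that zlin_def zp_levels mod_simps)+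
  then have "zmul p (y 0) (w1 1) = zzero" "zmul p (y 0) (w1 2) = zzero"
      "zmul p (y 0) (w2 1) = zzero" "zmul p (y 0) (w2 2) = zzero"
    using kill[of "zone p" zzero] kill[of zzero "zone p"] by simp_all
  then show ?thesis
    using action_nonzero zmul_eq_zzeroD[OF y0] w_Zp by blast
qed

lemma simple_phi: "simple_ve p 3 (str3 p w1 w2) (sublattice p E1 E2 t) phi"
  unfolding simple_ve_def
proof (intro allI impI)
  fix I
  assume I: "lie_ideal p 3 (str3 p w1 w2) I \<and> invariant p 3 (sublattice p E1 E2 t) phi I"
  then have I_lat: "I \<subseteq> lat p 3" and "vzero \<in> I"
    by (auto simp: lie_ideal_def submod_def)
  have in_vdom: "y \<in> vdom p 3 (sublattice p E1 E2 t) phi j" if "y \<in> I" for y j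
    using I that by (auto simp: invariant_def)
  have "y = vzero" if y: "y \<in> I" for y
  proof (rule vdom_x0_free_eq_vzero)
    have "br p 3 (str3 p w1 w2) x y = vzero" if "x \<in> lat p 3" for x
    proof (rule vdom_x0_free_eq_vzero)
      show "br p 3 (str3 p w1 w2) x y \<in> vdom p 3 (sublattice p E1 E2 t) phi j" for j
        using I y that by (auto simp: lie_ideal_def intro: in_vdom)
    qed (simp add: br_str3[of w1 w2, OF w_0])
    then show "y 0 = zzero"
      using centralizer_x0_free y I_lat by blast
  qed (rule in_vdom[OF y])
  then show "I = {vzero}"
    using \<open>vzero \<in> I\<close> by blast
qed

theorem self_similar: "self_similar_index p 3 (str3 p w1 w2) (p ^ (E1 + E2))"
  unfolding self_similar_index_def
  using subalg_sublattice alg_hom_phi simple_phi lat_index_sublattice[OF params_Zp(1)] by blast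

end

section \<open>The individual lattices\<close>

text \<open>Three applications of the shift divide every coordinate by \<open>p^k\<close>, so only \<open>0\<close> lies
  in the domains of all its powers.\<close>

definition cyclic_shift :: "nat \<Rightarrow> nat \<Rightarrow> zvec \<Rightarrow> zvec" where
  "cyclic_shift p k v = mkv3 (zp_div_pow p k (v 2)) (v 0) (v 1)"

lemma pos_nat_even_odd_cases:
  assumes "1 \<le> (k::nat)"
  obtains j where "1 \<le> j" "k = j + j" | j where "k = j + Suc j"
proof (cases "even k")
  case True
  then obtain j where "k = 2 * j"
    by (rule evenE)
  then show ?thesis
    using that(1)[of j] assms by simp
next
  case False
  then obtain j where "k = 2 * j + 1"
    by (rule oddE)
  then show ?thesis
    using that(2)[of j] by simp
qed

context padic
begin

lemma zone_zmul [simp]: "x \<in> Zp p \<Longrightarrow> zmul p (zone p) x = x"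
  by (rule Zp_eqI) (simp_all add: zp_levels mod_simps)

lemma zlin_zone_zzero [simp]: "x \<in> Zp p \<Longrightarrow> zlin p (zone p) zzero x y = x"
  by (rule Zp_eqI) (simp_all add: zlin_def zp_levels mod_simps)

lemma zlin_zzero_zone [simp]: "y \<in> Zp p \<Longrightarrow> zlin p zzero (zone p) x y = y"
  by (rule Zp_eqI) (simp_all add: zlin_def zp_levels mod_simps)

lemma zlin_zzero_right: "zlin p u zzero x y = zmul p u x"
  by (rule ext) (simp only: zlin_def zp_levels mod_simps; simp)

lemma tcoord2_zzero: "tcoord2 p E1 E2 zzero d1 d2 = zmul p (zpow p E2) d2"
  by (rule ext) (simp only: tcoord2_def zsub_def zp_levels mod_simps; simp)

lemma self_similar_str3I:
  assumes "ve_closed p w1 w2 E1 E2 t sg m11 m12 m21 m22" "ve_contracting p E1 E2 t m11 m12 m21 m22"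
    and "w1 \<in> lat p 3" "w2 \<in> lat p 3" "w1 0 = zzero" "w2 0 = zzero"
    and "t \<in> Zp p" "sg \<in> Zp p" "m11 \<in> Zp p" "m12 \<in> Zp p" "m21 \<in> Zp p" "m22 \<in> Zp p"
    and "w1 1 \<noteq> zzero \<or> w1 2 \<noteq> zzero \<or> w2 1 \<noteq> zzero \<or> w2 2 \<noteq> zzero"
  shows "self_similar_index p 3 (str3 p w1 w2) (p ^ (E1 + E2))"
proof -
  interpret str3_ve p w1 w2 E1 E2 t sg m11 m12 m21 m22
    using assms by unfold_locales
  show ?thesis
    by (rule self_similar)
qed

lemma even_ve_closed:
  assumes "w1 \<in> lat p 3" "w2 \<in> lat p 3"
  shows "ve_closed p w1 w2 j j zzero (zone p) (zone p) zzero zzero (zone p)"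
proof -
  have "w1 (Suc 0) \<in> Zp p" "w1 2 \<in> Zp p" "w2 (Suc 0) \<in> Zp p" "w2 2 \<in> Zp p"
    using lat3_Zp assms by auto
  then show ?thesis
    by (intro ve_closedI[where f = "zlin p (w1 1) (w2 1)" and g = "zlin p (w1 2) (w2 2)"])
      (simp_all add: tcoord2_zzero, (intro conjI ext;
       simp only: zlin_def tcoord1_def zp_levels mod_simps; simp add: algebra_simps))
qed

lemma even_ve_contracting:
  assumes "1 \<le> j"
  shows "ve_contracting p j j zzero (zone p) zzero zzero (zone p)"
proof (rule ve_contractingI)
  fix d1 d2 d1' d2' n
  assume d: "d1 \<in> Zp p" "d2 \<in> Zp p" "d1' \<in> Zp p" "d2' \<in> Zp p"
    and T: "tcoord1 p j d1' = zlin p (zone p) zzero d1 d2"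
      "tcoord2 p j j zzero d1' d2' = zlin p zzero (zone p) d1 d2"
    and n: "zp_dvd p n (zlin p (zone p) zzero d1' d2')" "zp_dvd p n (zlin p zzero (zone p) d1' d2')"
  have "d1 = zmul p (zpow p j) d1'" "d2 = zmul p (zpow p j) d2'"
    using T d by (simp_all add: tcoord1_def tcoord2_zzero)
  then have "zp_dvd p (n + j) d1" "zp_dvd p (n + j) d2"
    using n d by (auto intro: zp_dvd_zpow_mult[of _ n])
  then show "zp_dvd p (Suc n) (tcoord1 p j d1) \<and> zp_dvd p (Suc n) (tcoord2 p j j zzero d1 d2)"
    using d assms by (auto simp: tcoord1_def tcoord2_zzero intro: zp_dvd_zpow_mult)
qed

lemma self_similar_str3_even:
  assumes "w1 \<in> lat p 3" "w2 \<in> lat p 3" "w1 0 = zzero" "w2 0 = zzero"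
    and "w1 1 \<noteq> zzero \<or> w1 2 \<noteq> zzero \<or> w2 1 \<noteq> zzero \<or> w2 2 \<noteq> zzero"
    and "1 \<le> j"
  shows "self_similar_index p 3 (str3 p w1 w2) (p ^ (j + j))"
  by (rule self_similar_str3I[OF even_ve_closed even_ve_contracting]) (use assms in simp_all)

lemma L6_ve_closed:
  assumes "a \<in> Zp p"
  shows "ve_closed p (mkv3 zzero a zzero) (mkv3 zzero zzero a) (Suc j) j zzero
    (zone p) zzero (zone p) (zone p) zzero"
  by (rule ve_closedI[where f = "\<lambda>d1 d2. zmul p a d1" and g = "\<lambda>d1 d2. zmul p a d2"])
    (simp_all add: assms tcoord2_zzero, (intro conjI ext;
     simp only: zlin_def tcoord1_def zp_levels mod_simps; simp add: algebra_simps))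

lemma L6_ve_contracting: "ve_contracting p (Suc j) j zzero zzero (zone p) (zone p) zzero"
proof (rule ve_contractingI)
  fix d1 d2 d1' d2' n
  assume d: "d1 \<in> Zp p" "d2 \<in> Zp p" "d1' \<in> Zp p" "d2' \<in> Zp p"
    and T: "tcoord1 p (Suc j) d1' = zlin p zzero (zone p) d1 d2"
      "tcoord2 p (Suc j) j zzero d1' d2' = zlin p (zone p) zzero d1 d2"
    and n: "zp_dvd p n (zlin p zzero (zone p) d1' d2')" "zp_dvd p n (zlin p (zone p) zzero d1' d2')"
  have "d1 = zmul p (zpow p j) d2'" "d2 = zmul p (zpow p (Suc j)) d1'"
    using T d by (simp_all add: tcoord1_def tcoord2_zzero)
  then have "zp_dvd p (n + j) d1" "zp_dvd p (Suc (n + j)) d2"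
    using n d by (auto intro: zp_dvd_zpow_mult[of _ n])
  then show "zp_dvd p (Suc n) (tcoord1 p (Suc j) d1) \<and> zp_dvd p (Suc n) (tcoord2 p (Suc j) j zzero d1 d2)"
    using d by (auto simp: tcoord1_def tcoord2_zzero intro: zp_dvd_zpow_mult)
qed

lemma self_similar_L6_odd:
  assumes "a \<in> Zp p" "a \<noteq> zzero"
  shows "self_similar_index p 3 (L6 p a) (p ^ (Suc j + j))"
  unfolding L6_def
  by (rule self_similar_str3I[OF L6_ve_closed L6_ve_contracting]) (use assms in simp_all)

lemma companion_ve_contracting:
  assumes u: "zp_unit p u" and b: "b \<in> Zp p"
  shows "ve_contracting p j (Suc j) zzero b (zone p) u zzero"
proof (rule ve_contractingI)
  fix d1 d2 d1' d2' n
  assume d: "d1 \<in> Zp p" "d2 \<in> Zp p" "d1' \<in> Zp p" "d2' \<in> Zp p"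
    and T: "tcoord1 p j d1' = zlin p b (zone p) d1 d2"
      "tcoord2 p j (Suc j) zzero d1' d2' = zlin p u zzero d1 d2"
    and n: "zp_dvd p n (zlin p b (zone p) d1' d2')" "zp_dvd p n (zlin p u zzero d1' d2')"
  have second: "y = zsub p (zlin p b (zone p) x y) (zmul p b x)" if "x \<in> Zp p" "y \<in> Zp p" for x y
    by (rule Zp_eqI) (simp_all add: that b zlin_def zsub_def zp_levels mod_simps)
  have n1: "zp_dvd p n d1'"
    using n(2) d zp_dvd_unit_mult[OF u] by (simp add: zlin_zzero_right)
  have n2: "zp_dvd p n d2'"
    by (subst second[OF d(3,4)]) (intro zp_dvd_zsub n(1) zp_dvd_zmul n1)
  have "zmul p u d1 = zmul p (zpow p (Suc j)) d2'"
    using T(2) d by (simp add: tcoord2_zzero zlin_zzero_right)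
  then have "zp_dvd p (Suc (n + j)) (zmul p u d1)"
    using d n2 by (auto intro: zp_dvd_zpow_mult[of _ n])
  then have d1: "zp_dvd p (Suc (n + j)) d1"
    using zp_dvd_unit_mult[OF u d(1)] by simp
  have "zp_dvd p (n + j) (zlin p b (zone p) d1 d2)"
    unfolding T(1)[symmetric] tcoord1_def using d n1 by (auto intro: zp_dvd_zpow_mult[of _ n])
  moreover have "zp_dvd p (n + j) (zmul p b d1)"
    using zp_dvd_mono[OF d(1) d1] by (simp add: zp_dvd_zmul)
  ultimately have d2: "zp_dvd p (n + j) d2"
    by (subst second[OF d(1,2)]) (rule zp_dvd_zsub)
  show "zp_dvd p (Suc n) (tcoord1 p j d1) \<and> zp_dvd p (Suc n) (tcoord2 p j (Suc j) zzero d1 d2)"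
    using d d1 d2 by (auto simp: tcoord1_def tcoord2_zzero intro: zp_dvd_zpow_mult)
qed

lemma L2_ve_closed:
  assumes "u \<in> Zp p" "c = zmul p (zpow p 1) u"
  shows "ve_closed p (mkv3 zzero (zpow p s) (zmul p (zpow p (s + r)) c)) (mkv3 zzero (zpow p (s + r)) (zpow p s))
    j (Suc j) zzero (zone p) zzero (zone p) u zzero"
  by (rule ve_closedI[where f = "zlin p (zpow p s) (zmul p (zpow p (s + r)) (zpow p 1))"
        and g = "zlin p (zmul p (zpow p (s + r)) u) (zpow p s)"])
    (simp_all add: assms(1) tcoord2_zzero, (unfold assms(2), intro conjI ext;
     simp only: zlin_def tcoord1_def zp_levels mod_simps; simp add: algebra_simps power_add))

lemma self_similar_L2_odd:
  assumes "c \<in> Zp p" "zval p c = 1"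
  shows "self_similar_index p 3 (L2 p s r c) (p ^ (j + Suc j))"
proof -
  obtain u where u: "zp_unit p u" "c = zmul p (zpow p 1) u"
    using zval_eq_1E[OF assms] by blast
  then show ?thesis
    unfolding L2_def
    by (intro self_similar_str3I[OF L2_ve_closed[of u] companion_ve_contracting])
      (use assms zp_unit_Zp zpow_neq_zzero in simp_all)
qed

lemma L7_nonunit_ve_closed:
  assumes "u \<in> Zp p" "b \<in> Zp p" "a = zmul p (zpow p 1) b" "c = zmul p (zpow p 1) u"
  shows "ve_closed p (mkv3 zzero (zmul p (zpow p s) a) (zmul p (zpow p s) c)) (mkv3 zzero (zpow p s) zzero)
    j (Suc j) zzero (zone p) b (zone p) u zzero"
  by (rule ve_closedI[where f = "\<lambda>d1 d2. zmul p (zmul p (zpow p s) (zpow p 1)) (zlin p b (zone p) d1 d2)"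
        and g = "\<lambda>d1 d2. zmul p (zmul p (zpow p s) u) d1"])
    (simp_all add: assms(1,2) tcoord2_zzero, (unfold assms(3,4), intro conjI ext;
     simp only: zlin_def tcoord1_def zp_levels mod_simps; simp add: algebra_simps power_add))

lemma self_similar_L7_odd_nonunit:
  assumes "a \<in> Zp p" "zval p a \<ge> 1" "c \<in> Zp p" "zval p c = 1"
  shows "self_similar_index p 3 (L7 p s a c) (p ^ (j + Suc j))"
proof -
  obtain u where u: "zp_unit p u" "c = zmul p (zpow p 1) u"
    using zval_eq_1E[OF assms(3,4)] by blast
  define b where "b = zp_div_pow p 1 a"
  have b: "b \<in> Zp p" "a = zmul p (zpow p 1) b"
    using zval_ge_1D[OF assms(2)] assms(1) zpow_mult_div_pow by (simp_all add: b_def)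
  show ?thesis
    unfolding L7_def
    by (intro self_similar_str3I[OF L7_nonunit_ve_closed[of u b] companion_ve_contracting])
      (use assms u b zp_unit_Zp zpow_neq_zzero in simp_all)
qed

lemma zval_discriminant_odd:
  assumes "a \<in> Zp p" "zval p a = 0" "c \<in> Zp p"
    and "zval p (zadd p (zmul p (zof_int p 4) c) (zmul p a a)) = 1"
  shows "p \<noteq> 2"
proof
  assume "p = 2"
  have "a 1 \<noteq> 0" "0 \<le> a 1" "a 1 < int p"
    using zval_eq_0D[OF assms(1,2)] ZpD[OF assms(1), of 1] by (auto simp: zp_unit_def)
  then have "a 1 = 1"
    using \<open>p = 2\<close> by simp
  have "zadd p (zmul p (zof_int p 4) c) (zmul p a a) 1 = (2 * (2 * c 1) + a 1 * a 1) mod int p"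
    by (simp add: zp_levels mod_simps)
  also have "\<dots> = 1"
    using \<open>a 1 = 1\<close> \<open>p = 2\<close> by simp presburger
  finally show False
    using zval_eq_1D[OF _ assms(4)] assms(1,3) by (simp add: zp_dvd_def)
qed

lemma complete_square:
  assumes "p \<noteq> 2" "a \<in> Zp p" "c \<in> Zp p"
    and "zval p (zadd p (zmul p (zof_int p 4) c) (zmul p a a)) = 1"
  obtains h u where "h \<in> Zp p" "zp_unit p u" "a = zadd p h h"
    "c = zsub p (zmul p (zpow p 1) u) (zmul p h h)"
proof -
  let ?D = "zadd p (zmul p (zof_int p 4) c) (zmul p a a)"
  define h where "h = zmul p a (zhalf p)"
  have h: "h \<in> Zp p" "a = zadd p h h"
  proof -
    show "h \<in> Zp p"
      using assms zhalf(1) by (simp add: h_def)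
    have "zadd p h h = zmul p (zmul p (zof_int p 2) (zhalf p)) a"
      by (rule ext) (simp only: h_def zp_levels mod_simps; simp add: algebra_simps)
    then show "a = zadd p h h"
      using assms zhalf(2) by simp
  qed
  define g where "g = zadd p (zmul p h h) c"
  have gZ: "g \<in> Zp p"
    using h assms by (simp add: g_def)
  have "zmul p (zof_int p 4) g =
      zadd p ?D (zmul p (zmul p a a) (zmul p (zsub p (zmul p (zof_int p 2) (zhalf p)) (zone p))
        (zadd p (zmul p (zof_int p 2) (zhalf p)) (zone p))))"
    by (rule ext) (simp only: g_def h_def zsub_def zp_levels mod_simps; simp add: algebra_simps)
  then have g4: "zmul p (zof_int p 4) g = ?D"
    using zhalf(2)[OF assms(1)] assms(2,3)
    by (simp, intro Zp_eqI) (simp_all add: zsub_def zp_levels mod_simps)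
  have D: "zp_dvd p 1 ?D" "\<not> zp_dvd p 2 ?D"
    using zval_eq_1D[OF _ assms(4)] assms(2,3) by simp_all
  have "zp_dvd p 1 g"
    using zp_dvd_unit_mult[OF zp_unit_four[OF assms(1)] gZ] D(1) g4 by simp
  moreover have "\<not> zp_dvd p 2 g"
    using D(2) zp_dvd_zmul[of 2 g "zof_int p 4"] g4 by auto
  ultimately obtain u where u: "zp_unit p u" "g = zmul p (zpow p 1) u"
    using zp_unit_factor[OF gZ] by blast
  have "c = zsub p g (zmul p h h)"
    by (rule Zp_eqI) (simp_all add: g_def h assms zsub_def zp_levels mod_simps)
  then show ?thesis
    using that h u by simp
qed

lemma L7_unit_ve_closed:
  assumes "h \<in> Zp p" "u \<in> Zp p" "a = zadd p h h" "c = zsub p (zmul p (zpow p 1) u) (zmul p h h)"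
  shows "ve_closed p (mkv3 zzero (zmul p (zpow p s) a) (zmul p (zpow p s) c)) (mkv3 zzero (zpow p s) zzero)
    j (Suc j) h (zone p) zzero (zone p) u (zneg p h)"
  by (rule ve_closedI[where f = "\<lambda>d1 d2. zmul p (zpow p s) (zadd p (zmul p h d1) (zmul p (zpow p 1) d2))"
        and g = "\<lambda>d1 d2. zmul p (zpow p s) (zadd p (zmul p u d1) (zmul p h d2))"])
    (simp_all add: assms(1,2), (unfold assms(3,4), intro conjI ext;
     simp only: zlin_def tcoord1_def tcoord2_def zsub_def zp_levels mod_simps;
     simp add: algebra_simps power_add))

lemma L7_unit_ve_contracting:
  assumes h: "h \<in> Zp p" and u: "zp_unit p u"
  shows "ve_contracting p j (Suc j) h zzero (zone p) u (zneg p h)"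
proof (rule ve_contractingI)
  fix d1 d2 d1' d2' n
  assume d: "d1 \<in> Zp p" "d2 \<in> Zp p" "d1' \<in> Zp p" "d2' \<in> Zp p"
    and T: "tcoord1 p j d1' = zlin p zzero (zone p) d1 d2"
      "tcoord2 p j (Suc j) h d1' d2' = zlin p u (zneg p h) d1 d2"
    and n: "zp_dvd p n (zlin p zzero (zone p) d1' d2')" "zp_dvd p n (zlin p u (zneg p h) d1' d2')"
  have uZ: "u \<in> Zp p"
    using u by (rule zp_unit_Zp)
  have n2: "zp_dvd p n d2'"
    using n(1) d by simp
  have "zmul p u d1' = zadd p (zlin p u (zneg p h) d1' d2') (zmul p h d2')"
    by (rule Zp_eqI) (simp_all add: d h uZ zlin_def zp_levels mod_simps)
  then have n1: "zp_dvd p n d1'"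
    using zp_dvd_unit_mult[OF u d(3)] zp_dvd_zadd[OF n(2) zp_dvd_zmul[OF n2]] by simp
  have "d2 = zmul p (zpow p j) d1'"
    using T(1) d by (simp add: tcoord1_def)
  then have d2: "zp_dvd p (n + j) d2"
    using d n1 by (auto intro: zp_dvd_zpow_mult[of _ n])
  have "zmul p (zpow p (Suc j)) d2' = zadd p (tcoord2 p j (Suc j) h d1' d2') (zmul p h (tcoord1 p j d1'))"
    by (rule ext) (simp only: tcoord2_def tcoord1_def zsub_def zp_levels mod_simps; simp add: algebra_simps)
  also have "\<dots> = zmul p u d1"
    unfolding T by (rule Zp_eqI) (simp_all add: d h uZ zlin_def zp_levels mod_simps)
  finally have "zp_dvd p (Suc (n + j)) (zmul p u d1)"
    using d n2 zp_dvd_zpow_mult[of d2' n "Suc (n + j)" "Suc j"] by simp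
  then have d1: "zp_dvd p (Suc (n + j)) d1"
    using zp_dvd_unit_mult[OF u d(1)] by simp
  then have t1: "zp_dvd p (Suc n) (tcoord1 p j d1)"
    using d by (auto simp: tcoord1_def intro: zp_dvd_zpow_mult)
  have "zp_dvd p (Suc n) (zmul p (zpow p (Suc j)) d2)"
    using zp_dvd_zpow_mult[OF d(2) d2] by simp
  then have "zp_dvd p (Suc n) (tcoord2 p j (Suc j) h d1 d2)"
    unfolding tcoord2_def using zp_dvd_zmul[OF t1] by (rule zp_dvd_zsub)
  with t1 show "zp_dvd p (Suc n) (tcoord1 p j d1) \<and> zp_dvd p (Suc n) (tcoord2 p j (Suc j) h d1 d2)" ..
qed

lemma self_similar_L7_odd_unit:
  assumes "a \<in> Zp p" "zval p a = 0" "c \<in> Zp p"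
    and "zval p (zadd p (zmul p (zof_int p 4) c) (zmul p a a)) = 1"
  shows "self_similar_index p 3 (L7 p s a c) (p ^ (j + Suc j))"
proof -
  obtain h u where "h \<in> Zp p" "zp_unit p u" "a = zadd p h h"
    "c = zsub p (zmul p (zpow p 1) u) (zmul p h h)"
    using complete_square[OF zval_discriminant_odd[OF assms] assms(1,3,4)] by blast
  then show ?thesis
    unfolding L7_def
    by (intro self_similar_str3I[OF L7_unit_ve_closed[of h u] L7_unit_ve_contracting])
      (use assms zp_unit_Zp zpow_neq_zzero in simp_all)
qed

lemma L7_0_1_inverse_dvd:
  assumes "3 \<le> p" "x \<in> Zp p" "y \<in> Zp p" "i \<le> 1"
    and N1: "zp_dvd p n (zlin p (zof_int p 2) (zof_int p (1 - int p)) x y)"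
    and S: "zp_dvd p (n + i) (zadd p (zlin p (zof_int p 2) (zof_int p (- (1 + int p))) x y)
      (zlin p (zof_int p 2) (zof_int p (1 - int p)) x y))"
  shows "zp_dvd p n y \<and> zp_dvd p (n + i) x"
proof
  let ?N1 = "zlin p (zof_int p 2) (zof_int p (1 - int p)) x y"
  let ?S = "zadd p (zlin p (zof_int p 2) (zof_int p (- (1 + int p))) x y) ?N1"
  have "zmul p (zof_int p 2) y = zsub p (zmul p (zof_int p 2) ?N1) ?S"
    by (rule ext) (simp only: zlin_def zsub_def zp_levels mod_simps; simp add: algebra_simps)
  moreover have "zp_dvd p n ?S"
    using zp_dvd_mono[OF _ S] assms(2,3) by simp
  ultimately show y: "zp_dvd p n y"
    using zp_dvd_unit_mult[OF zp_unit_two assms(3)] zp_dvd_zsub[OF zp_dvd_zmul[OF N1]] assms(1)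
    by simp
  have "zmul p (zof_int p 4) x = zadd p ?S (zmul p (zpow p 1) (zmul p (zof_int p 2) y))"
    by (rule ext) (simp only: zlin_def zp_levels mod_simps; simp add: algebra_simps)
  moreover have "zp_dvd p (n + i) (zmul p (zpow p 1) (zmul p (zof_int p 2) y))"
    using zp_dvd_zpow_mult[OF _ zp_dvd_zmul[OF y]] assms(3,4) by simp
  ultimately show "zp_dvd p (n + i) x"
    using zp_dvd_unit_mult[OF zp_unit_four assms(2)] zp_dvd_zadd[OF S] assms(1) by simp
qed

lemma L7_0_1_ve_closed:
  "ve_closed p (mkv3 zzero (zmul p (zpow p s) zzero) (zmul p (zpow p s) (zone p))) (mkv3 zzero (zpow p s) zzero)
    j (Suc j) (zone p) (zof_int p (-1))
    (zof_int p 2) (zof_int p (1 - int p)) (zof_int p 2) (zof_int p (- (1 + int p)))"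
  by (rule ve_closedI[where f = "\<lambda>d1 d2. zmul p (zpow p s) (zsub p (zmul p (zpow p 1) d2) d1)"
        and g = "\<lambda>d1 d2. zmul p (zpow p s) d2"])
    (simp_all, (intro conjI ext;
     simp only: zlin_def tcoord1_def tcoord2_def zsub_def zp_levels mod_simps;
     simp add: algebra_simps power_add))

lemma L7_0_1_ve_contracting:
  assumes "3 \<le> p"
  shows "ve_contracting p j (Suc j) (zone p)
    (zof_int p 2) (zof_int p (1 - int p)) (zof_int p 2) (zof_int p (- (1 + int p)))"
proof (rule ve_contractingI)
  let ?N1 = "zlin p (zof_int p 2) (zof_int p (1 - int p))"
    and ?N2 = "zlin p (zof_int p 2) (zof_int p (- (1 + int p)))"
  fix d1 d2 d1' d2' n
  assume d: "d1 \<in> Zp p" "d2 \<in> Zp p" "d1' \<in> Zp p" "d2' \<in> Zp p"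
    and T: "tcoord1 p j d1' = ?N1 d1 d2" "tcoord2 p j (Suc j) (zone p) d1' d2' = ?N2 d1 d2"
    and n: "zp_dvd p n (?N1 d1' d2')" "zp_dvd p n (?N2 d1' d2')"
  have n': "zp_dvd p n d2'" "zp_dvd p n d1'"
    using L7_0_1_inverse_dvd[OF assms d(3,4), of 0] zp_dvd_zadd[OF n(2,1)] n(1) by simp_all
  have "zp_dvd p (n + j) (?N1 d1 d2)"
    unfolding T(1)[symmetric] tcoord1_def using d(3) n'(2) by (rule zp_dvd_zpow_mult) simp
  moreover have "zmul p (zpow p (Suc j)) d2' = zadd p (tcoord2 p j (Suc j) (zone p) d1' d2') (tcoord1 p j d1')"
    by (rule ext) (simp only: tcoord1_def tcoord2_def zsub_def zp_levels mod_simps; simp add: algebra_simps)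
  then have "zp_dvd p (n + j + 1) (zadd p (?N2 d1 d2) (?N1 d1 d2))"
    unfolding T using zp_dvd_zpow_mult[OF d(4) n'(1), of "n + j + 1" "Suc j"] by simp
  ultimately have d2: "zp_dvd p (n + j) d2" and d1: "zp_dvd p (n + j + 1) d1"
    using L7_0_1_inverse_dvd[OF assms d(1,2), of 1] by simp_all
  have t1: "zp_dvd p (Suc n) (tcoord1 p j d1)"
    unfolding tcoord1_def using d(1) d1 by (rule zp_dvd_zpow_mult) simp
  have "zp_dvd p (Suc n) (zmul p (zpow p (Suc j)) d2)"
    using zp_dvd_zpow_mult[OF d(2) d2] by simp
  then have "zp_dvd p (Suc n) (tcoord2 p j (Suc j) (zone p) d1 d2)"
    unfolding tcoord2_def using zp_dvd_zmul[OF t1] by (rule zp_dvd_zsub)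
  with t1 show "zp_dvd p (Suc n) (tcoord1 p j d1) \<and> zp_dvd p (Suc n) (tcoord2 p j (Suc j) (zone p) d1 d2)" ..
qed

lemma self_similar_L7_0_1_odd:
  assumes "3 \<le> p"
  shows "self_similar_index p 3 (L7 p s zzero (zone p)) (p ^ (j + Suc j))"
  unfolding L7_def
  by (rule self_similar_str3I[OF L7_0_1_ve_closed L7_0_1_ve_contracting[OF assms]])
    (simp_all add: zpow_neq_zzero)

lemma br_L6_zzero: "br p 3 (L6 p zzero) u v = vzero"
  unfolding L6_def br_str3[of "mkv3 zzero zzero zzero" "mkv3 zzero zzero zzero", simplified] vzero_mkv3
  by (simp, intro conjI ext; simp add: zlin_def zsub_def zp_levels)

lemma sublattice_0_zzero: "v \<in> sublattice p 0 k zzero \<longleftrightarrow> v \<in> lat p 3 \<and> zp_dvd p k (v 2)"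
proof -
  have "zadd p (zmul p zzero (v 1)) (v 2) = v 2" if "v \<in> lat p 3"
    by (rule Zp_eqI) (use lat3_Zp[OF that] in \<open>simp_all add: zp_levels\<close>)
  then show ?thesis
    using lat3_Zp by (auto simp: sublattice_def)
qed

lemma alg_hom_cyclic_shift:
  "alg_hom_on p 3 (L6 p zzero) (sublattice p 0 k zzero) (cyclic_shift p k)"
  unfolding alg_hom_on_def
proof (intro conjI ballI)
  fix u
  assume "u \<in> sublattice p 0 k zzero"
  then obtain a b c where u: "u = mkv3 a b c" "a \<in> Zp p" "b \<in> Zp p" "c \<in> Zp p" "zp_dvd p k c"
    by (auto simp: sublattice_0_zzero elim!: lat3_cases)
  show "cyclic_shift p k u \<in> lat p 3"
    using u by (simp add: cyclic_shift_def)
  fix s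
  assume "s \<in> Zp p"
  then show "cyclic_shift p k (vsmul p s u) = vsmul p s (cyclic_shift p k u)"
    using u by (simp add: cyclic_shift_def zp_div_pow_zmul)
next
  fix u v
  assume "u \<in> sublattice p 0 k zzero" "v \<in> sublattice p 0 k zzero"
  then obtain a b c a' b' c' where u: "u = mkv3 a b c" "a \<in> Zp p" "b \<in> Zp p" "c \<in> Zp p" "zp_dvd p k c"
    and v: "v = mkv3 a' b' c'" "a' \<in> Zp p" "b' \<in> Zp p" "c' \<in> Zp p" "zp_dvd p k c'"
    by (auto simp: sublattice_0_zzero elim!: lat3_cases)
  show "cyclic_shift p k (vadd p u v) = vadd p (cyclic_shift p k u) (cyclic_shift p k v)"
    using u v by (simp add: cyclic_shift_def zp_div_pow_zadd)
  show "cyclic_shift p k (br p 3 (L6 p zzero) u v) =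
      br p 3 (L6 p zzero) (cyclic_shift p k u) (cyclic_shift p k v)"
    by (simp add: br_L6_zzero cyclic_shift_def vzero_mkv3 zp_div_pow_eqI)
qed

lemma vdom_cyclic_shift_dvd:
  assumes "1 \<le> k"
  shows "v \<in> vdom p 3 (sublattice p 0 k zzero) (cyclic_shift p k) (3 * n) \<Longrightarrow>
    zp_dvd p n (v 0) \<and> zp_dvd p n (v 1) \<and> zp_dvd p n (v 2)"
proof (induction n arbitrary: v)
  case 0
  then show ?case
    using lat3_Zp by simp
next
  case (Suc n)
  let ?M = "sublattice p 0 k zzero" and ?s = "cyclic_shift p k"
  have "3 * Suc n = Suc (Suc (Suc (3 * n)))"
    by simp
  then have v: "v \<in> ?M" "?s v \<in> ?M" "?s (?s v) \<in> ?M" "?s (?s (?s v)) \<in> vdom p 3 ?M ?s (3 * n)"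
    using Suc.prems by (simp_all only: vdom.simps mem_Collect_eq)
  have vZ: "v 0 \<in> Zp p" "v 1 \<in> Zp p" "v 2 \<in> Zp p"
    using v(1) lat3_Zp by (auto simp: sublattice_0_zzero)
  have dvd: "zp_dvd p k (v 0)" "zp_dvd p k (v 1)" "zp_dvd p k (v 2)"
    using v(1-3) by (simp_all add: sublattice_0_zzero cyclic_shift_def)
  have "?s (?s (?s v)) = mkv3 (zp_div_pow p k (v 0)) (zp_div_pow p k (v 1)) (zp_div_pow p k (v 2))"
    by (simp add: cyclic_shift_def)
  then have "zp_dvd p (n + k) (v 0) \<and> zp_dvd p (n + k) (v 1) \<and> zp_dvd p (n + k) (v 2)"
    using Suc.IH[OF v(4)] zp_dvd_div_pow vZ dvd by simp
  then show ?case
    using zp_dvd_mono[of _ "n + k" "Suc n"] assms vZ by simp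
qed

lemma simple_cyclic_shift:
  assumes "1 \<le> k"
  shows "simple_ve p 3 (L6 p zzero) (sublattice p 0 k zzero) (cyclic_shift p k)"
  unfolding simple_ve_def
proof (intro allI impI)
  fix I
  assume I: "lie_ideal p 3 (L6 p zzero) I \<and> invariant p 3 (sublattice p 0 k zzero) (cyclic_shift p k) I"
  then have I_lat: "I \<subseteq> lat p 3" and "vzero \<in> I"
    by (auto simp: lie_ideal_def submod_def)
  have "y = vzero" if "y \<in> I" for y
  proof -
    have "zp_dvd p n (y 0) \<and> zp_dvd p n (y 1) \<and> zp_dvd p n (y 2)" for n
      using vdom_cyclic_shift_dvd[OF assms] I \<open>y \<in> I\<close> by (auto simp: invariant_def)
    then have "y 0 = zzero" "y 1 = zzero" "y 2 = zzero"
      using zp_dvd_all_eq_zzero by blast+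
    then show ?thesis
      using lat3_eq_mkv3[of y] I_lat \<open>y \<in> I\<close> by (auto simp: vzero_mkv3)
  qed
  then show "I = {vzero}"
    using \<open>vzero \<in> I\<close> by blast
qed

lemma self_similar_L6_zzero:
  assumes "1 \<le> k"
  shows "self_similar_index p 3 (L6 p zzero) (p ^ k)"
proof -
  have "subalg p 3 (L6 p zzero) (sublattice p 0 k zzero)"
    using submod_sublattice[of zzero 0 k] submod_def
    by (auto simp: subalg_def br_L6_zzero)
  then show ?thesis
    unfolding self_similar_index_def
    using alg_hom_cyclic_shift simple_cyclic_shift[OF assms] lat_index_sublattice[of zzero 0 k]
    by auto
qed

lemma self_similar_L6:
  assumes "a \<in> Zp p" "1 \<le> k"
  shows "self_similar_index p 3 (L6 p a) (p ^ k)"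
proof (cases "a = zzero")
  case True
  then show ?thesis
    using self_similar_L6_zzero[OF assms(2)] by simp
next
  case False
  from assms(2) show ?thesis
  proof (cases rule: pos_nat_even_odd_cases)
    case (1 j)
    then show ?thesis
      unfolding L6_def by (simp add: self_similar_str3_even assms False)
  next
    case (2 j)
    then show ?thesis
      using self_similar_L6_odd[OF assms(1) False, of j] by (simp add: add.commute)
  qed
qed

lemma self_similar_L2:
  assumes "c \<in> Zp p" "zval p c = 1" "1 \<le> k"
  shows "self_similar_index p 3 (L2 p s r c) (p ^ k)"
  using assms(3)
proof (cases rule: pos_nat_even_odd_cases)
  case (1 j)
  then show ?thesis
    unfolding L2_def by (simp add: self_similar_str3_even assms zpow_neq_zzero)
next
  case (2 j)
  then show ?thesis
    using self_similar_L2_odd[OF assms(1,2)] by simp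
qed

lemma self_similar_L7:
  assumes "a \<in> Zp p" "c \<in> Zp p"
    and "(zval p c = 1 \<and> zval p a \<ge> 1) \<or>
      (zval p (zadd p (zmul p (zof_int p 4) c) (zmul p a a)) = 1 \<and> zval p a = 0)"
    and "1 \<le> k"
  shows "self_similar_index p 3 (L7 p s a c) (p ^ k)"
  using assms(4)
proof (cases rule: pos_nat_even_odd_cases)
  case (1 j)
  then show ?thesis
    unfolding L7_def by (simp add: self_similar_str3_even assms(1,2) zpow_neq_zzero)
next
  case (2 j)
  then show ?thesis
    using assms(3) self_similar_L7_odd_nonunit[OF assms(1) _ assms(2)]
      self_similar_L7_odd_unit[OF assms(1) _ assms(2)]
    by auto
qed

lemma self_similar_L7_0_1:
  assumes "3 \<le> p" "1 \<le> k"
  shows "self_similar_index p 3 (L7 p s zzero (zone p)) (p ^ k)"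
  using assms(2)
proof (cases rule: pos_nat_even_odd_cases)
  case (1 j)
  then show ?thesis
    unfolding L7_def by (simp add: self_similar_str3_even zpow_neq_zzero)
next
  case (2 j)
  then show ?thesis
    using self_similar_L7_0_1_odd[OF assms(1)] by simp
qed

end

theorem lemma1p9:
  fixes p k :: nat
  assumes "prime p" and "k \<ge> 1"
  shows "(\<forall>a\<in>Zp p. self_similar_index p 3 (L6 p a) (p ^ k))
       \<and> (\<forall>s r c. c \<in> Zp p \<and> zval p c = 1 \<longrightarrow> self_similar_index p 3 (L2 p s r c) (p ^ k))
       \<and> (\<forall>s a c. a \<in> Zp p \<and> c \<in> Zp p \<and>
            ((zval p c = 1 \<and> zval p a \<ge> 1) \<or>
             (zval p (zadd p (zmul p (zof_int p 4) c) (zmul p a a)) = 1 \<and> zval p a = 0 \<and> zval p c = 0))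
            \<longrightarrow> self_similar_index p 3 (L7 p s a c) (p ^ k))
       \<and> (p \<ge> 3 \<longrightarrow> (\<forall>s. self_similar_index p 3 (L7 p s zzero (zof_int p 1)) (p ^ k)))"
proof -
  interpret padic p
    using assms(1) by unfold_locales
  show ?thesis
    using self_similar_L6 self_similar_L2 self_similar_L7 self_similar_L7_0_1 assms(2) by blast
qed

end
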